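(* Let $\kappa>0$ and $\mathcal{L}f=\frac{\kappa}{2}f''$. Let $\sigma:\mathbf{R}\to\mathbf{R}$ be Lipschitz with Lipschitz constant $\mathrm{Lip}_\sigma$, $\sigma(0)=0$, and $\inf_x|\sigma(x)/x|>0$. Let $u_0:\mathbf{R}\to\mathbf{R}_+$ be bounded and let $u$ be the mild solution of $\partial_tu_t(x)=\frac{\kappa}{2}\partial_x^2u_t(x)+\sigma(u_t(x))\,\partial^2_{tx}W(t,x)$ with initial datum $u_0$. If $\sup_{x\in\mathbf{R}}|e^{cx/2}u_0(x)|<\infty$ for some $c\in\mathbf{R}$, then for every $$\beta>\frac{\kappa c^2}{4}+\frac{\mathrm{Lip}_\sigma^4}{4\kappa}$$ there exists a finite constant $A_\beta$ such that $\mathrm{E}(|u_t(x)|^2)\le A_\beta\exp(\beta t-cx)$ uniformly for all $t\ge0$ and $x\in\mathbf{R}$.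
   Context: $W$ is a two-parameter Brownian sheet. The mild solution is the predictable random field $u$ with $u_t(x)=(P_tu_0)(x)+\int_{[0,t]\times\mathbf{R}}p_{t-s}(y-x)\sigma(u_s(y))\,W(ds\,dy)$, where $p_t(x)=(2\pi\kappa t)^{-1/2}e^{-x^2/(2\kappa t)}$ and $(P_tf)(x)=\int p_t(y-x)f(y)\,dy$. *)

theory Defs
  imports "HOL-Probability.Probability"
begin

definition heat_kernel :: "real \<Rightarrow> real \<Rightarrow> real \<Rightarrow> real" where
  "heat_kernel \<kappa> t x = exp (- (x^2) / (2 * \<kappa> * t)) / sqrt (2 * pi * \<kappa> * t)"

definition heat_sg :: "real \<Rightarrow> real \<Rightarrow> (real \<Rightarrow> real) \<Rightarrow> real \<Rightarrow> real" where
  "heat_sg \<kappa> t f x = (if t = 0 then f x else (LINT y|lborel. heat_kernel \<kappa> t (y - x) * f y))"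

definition rect_incr :: "(real \<Rightarrow> real \<Rightarrow> 'a \<Rightarrow> real) \<Rightarrow> real \<Rightarrow> real \<Rightarrow> real \<Rightarrow> real \<Rightarrow> 'a \<Rightarrow> real" where
  "rect_incr W a b x y \<omega> = W b y \<omega> - W b x \<omega> - W a y \<omega> + W a x \<omega>"

definition filtration_on :: "'a measure \<Rightarrow> (real \<Rightarrow> 'a set set) \<Rightarrow> bool" where
  "filtration_on M F \<longleftrightarrow>
     (\<forall>t. sigma_algebra (space M) (F t) \<and> F t \<subseteq> sets M) \<and> (\<forall>s t. s \<le> t \<longrightarrow> F s \<subseteq> F t)"

text \<open>Two-parameter Brownian sheet W(t,x), t \<ge> 0, x real, with respect to the filtration F:
  adapted, vanishing on the axes, and for 0 \<le> a < b the increments over disjoint rectangles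
  (a,b] x (x_i, x_(i+1)] are independent of each other and of F a, and centred normal with
  variance (b-a)(x_(i+1)-x_i).\<close>

definition brownian_sheet :: "'a measure \<Rightarrow> (real \<Rightarrow> 'a set set) \<Rightarrow> (real \<Rightarrow> real \<Rightarrow> 'a \<Rightarrow> real) \<Rightarrow> bool" where
  "brownian_sheet M F W \<longleftrightarrow>
     prob_space M \<and> filtration_on M F \<and>
     (\<forall>x \<omega>. W 0 x \<omega> = 0) \<and> (\<forall>t \<omega>. W t 0 \<omega> = 0) \<and>
     (\<forall>t x. 0 \<le> t \<longrightarrow> (\<forall>B\<in>sets borel. W t x -` B \<inter> space M \<in> F t)) \<and>
     (\<forall>a b (xs :: real list). 0 \<le> a \<longrightarrow> a < b \<longrightarrow> sorted_wrt (<) xs \<longrightarrow>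
        prob_space.indep_sets M
          (\<lambda>j. case j of None \<Rightarrow> F a
                | Some i \<Rightarrow> {rect_incr W a b (xs!i) (xs!Suc i) -` B \<inter> space M | B. B \<in> sets borel})
          (insert None (Some ` {..<length xs - 1})) \<and>
        (\<forall>i < length xs - 1. distributed M lborel (rect_incr W a b (xs!i) (xs!Suc i))
             (normal_density 0 (sqrt ((b - a) * (xs!Suc i - xs!i))))))"

definition predictable :: "'a measure \<Rightarrow> (real \<Rightarrow> 'a set set) \<Rightarrow> (real \<times> real \<times> 'a) measure" where
  "predictable M F = sigma (UNIV \<times> UNIV \<times> space M)
     ({{(s, y, \<omega>). a < s \<and> s \<le> b \<and> y \<in> B \<and> \<omega> \<in> G} | a b B G. 0 \<le> a \<and> B \<in> sets borel \<and> G \<in> F a}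
      \<union> {{(s, y, \<omega>). s = 0 \<and> y \<in> B \<and> \<omega> \<in> G} | B G. B \<in> sets borel \<and> G \<in> F 0})"

definition simple_pred :: "'a measure \<Rightarrow> (real \<Rightarrow> 'a set set) \<Rightarrow> nat \<Rightarrow> (nat \<Rightarrow> 'a \<Rightarrow> real)
    \<Rightarrow> (nat \<Rightarrow> real) \<Rightarrow> (nat \<Rightarrow> real) \<Rightarrow> (nat \<Rightarrow> real) \<Rightarrow> (nat \<Rightarrow> real) \<Rightarrow> bool" where
  "simple_pred M F n X a b x y \<longleftrightarrow>
     (\<forall>k<n. 0 \<le> a k \<and> a k < b k \<and> x k < y k \<and> (\<exists>C. \<forall>\<omega>\<in>space M. \<bar>X k \<omega>\<bar> \<le> C) \<and>
            (\<forall>B\<in>sets borel. X k -` B \<inter> space M \<in> F (a k)))"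

definition simple_fun_st :: "nat \<Rightarrow> (nat \<Rightarrow> 'a \<Rightarrow> real)
    \<Rightarrow> (nat \<Rightarrow> real) \<Rightarrow> (nat \<Rightarrow> real) \<Rightarrow> (nat \<Rightarrow> real) \<Rightarrow> (nat \<Rightarrow> real) \<Rightarrow> real \<Rightarrow> real \<Rightarrow> 'a \<Rightarrow> real" where
  "simple_fun_st n X a b x y s z \<omega> =
     (\<Sum>k<n. X k \<omega> * indicator {a k<..b k} s * indicator {x k<..y k} z)"

definition simple_int :: "(real \<Rightarrow> real \<Rightarrow> 'a \<Rightarrow> real) \<Rightarrow> nat \<Rightarrow> (nat \<Rightarrow> 'a \<Rightarrow> real)
    \<Rightarrow> (nat \<Rightarrow> real) \<Rightarrow> (nat \<Rightarrow> real) \<Rightarrow> (nat \<Rightarrow> real) \<Rightarrow> (nat \<Rightarrow> real) \<Rightarrow> 'a \<Rightarrow> real" where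
  "simple_int W n X a b x y \<omega> = (\<Sum>k<n. X k \<omega> * rect_incr W (a k) (b k) (x k) (y k) \<omega>)"

definition stoch_int :: "'a measure \<Rightarrow> (real \<Rightarrow> 'a set set) \<Rightarrow> (real \<Rightarrow> real \<Rightarrow> 'a \<Rightarrow> real)
    \<Rightarrow> (real \<Rightarrow> real \<Rightarrow> 'a \<Rightarrow> real) \<Rightarrow> ('a \<Rightarrow> real) \<Rightarrow> bool" where
  "stoch_int M F W f I \<longleftrightarrow> I \<in> borel_measurable M \<and>
     (\<exists>n X a b x y. (\<forall>m. simple_pred M F (n m) (X m) (a m) (b m) (x m) (y m)) \<and>
        ((\<lambda>m. \<integral>\<^sup>+\<omega>. \<integral>\<^sup>+s. \<integral>\<^sup>+z. ennreal ((simple_fun_st (n m) (X m) (a m) (b m) (x m) (y m) s z \<omega>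
              - f s z \<omega>)^2) \<partial>lborel \<partial>lborel \<partial>M) \<longlonglongrightarrow> 0) \<and>
        ((\<lambda>m. \<integral>\<^sup>+\<omega>. ennreal ((simple_int W (n m) (X m) (a m) (b m) (x m) (y m) \<omega> - I \<omega>)^2) \<partial>M)
            \<longlonglongrightarrow> 0))"

definition mild_solution :: "'a measure \<Rightarrow> (real \<Rightarrow> 'a set set) \<Rightarrow> (real \<Rightarrow> real \<Rightarrow> 'a \<Rightarrow> real)
    \<Rightarrow> real \<Rightarrow> (real \<Rightarrow> real) \<Rightarrow> (real \<Rightarrow> real) \<Rightarrow> (real \<Rightarrow> real \<Rightarrow> 'a \<Rightarrow> real) \<Rightarrow> bool" where
  "mild_solution M F W \<kappa> \<sigma> u0 u \<longleftrightarrow>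
     (\<lambda>(t, x, \<omega>). if 0 \<le> t then u t x \<omega> else 0) \<in> borel_measurable (predictable M F) \<and>
     (\<forall>T\<ge>0. \<exists>C::real. \<forall>t\<in>{0..T}. \<forall>x. (\<integral>\<^sup>+\<omega>. ennreal ((u t x \<omega>)^2) \<partial>M) \<le> ennreal C) \<and>
     (\<forall>t\<ge>0. \<forall>x. \<exists>I. stoch_int M F W
         (\<lambda>s y \<omega>. indicator {0..<t} s * heat_kernel \<kappa> (t - s) (y - x) * \<sigma> (u s y \<omega>)) I \<and>
       (AE \<omega> in M. u t x \<omega> = heat_sg \<kappa> t u0 x + I \<omega>))"

end

theory Submission
  imports Defs
begin

text \<open>
  Taking second moments in the mild formulation, Walsh's isometry (which for an integral defined
  as an \<open>L\<^sup>2\<close>-limit of simple integrals survives as an inequality) and \<open>\<bar>\<sigma> v\<bar> \<le> L \<bar>v\<bar>\<close>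
  give, for every \<open>\<delta> > 0\<close>,
  \<open>E u\<^sub>t(x)\<^sup>2 \<le> (1 + \<delta>) (P\<^sub>t u\<^sub>0)(x)\<^sup>2 + (1 + 1/\<delta>) L\<^sup>2 \<integral>\<^sub>0\<^sup>t \<integral> p\<^sub>t\<^sub>-\<^sub>s(y - x)\<^sup>2 E u\<^sub>s(y)\<^sup>2 dy ds\<close>.
  Completing the square in the Gaussian exponents, \<open>(P\<^sub>t u\<^sub>0)(x)\<^sup>2 \<le> K\<^sup>2 e\<^bsup>\<kappa>c\<^sup>2t/4 - cx\<^esup>\<close>, and the
  space-time convolution with \<open>p\<^sup>2\<close> maps \<open>e\<^bsup>\<beta>s - cy\<^esup>\<close> to at most \<open>e\<^bsup>\<beta>t - cx\<^esup> / \<surd>(4\<kappa>(\<beta> - \<kappa>c\<^sup>2/4))\<close>.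
  As \<open>\<beta> > \<kappa>c\<^sup>2/4 + L\<^sup>4/(4\<kappa>)\<close>, \<open>\<delta>\<close> can be chosen to make the convolution term a contraction for
  this weight; iterating the inequality, the a priori local bound on second moments makes the
  remainder vanish, leaving a geometric series.
\<close>

section \<open>Increments of the Brownian sheet\<close>

lemma brownian_sheet_prob_space: "brownian_sheet M F W \<Longrightarrow> prob_space M"
  by (simp add: brownian_sheet_def)

lemma brownian_sheet_filtration:
  assumes "brownian_sheet M F W"
  shows "sigma_algebra (space M) (F t)" and "F t \<subseteq> sets M" and "s \<le> t \<Longrightarrow> F s \<subseteq> F t"
  using assms by (simp_all add: brownian_sheet_def filtration_on_def)

definition measurable_wrt :: "'a measure \<Rightarrow> 'a set set \<Rightarrow> ('a \<Rightarrow> real) \<Rightarrow> bool" where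
  "measurable_wrt M G Z \<longleftrightarrow> (\<forall>B\<in>sets borel. Z -` B \<inter> space M \<in> G)"

lemma measurable_wrt_borel_measurable:
  "measurable_wrt M G Z \<Longrightarrow> G \<subseteq> sets M \<Longrightarrow> Z \<in> borel_measurable M"
  unfolding measurable_wrt_def by (intro measurableI) auto

lemma measurable_wrt_mono: "measurable_wrt M G Z \<Longrightarrow> G \<subseteq> H \<Longrightarrow> measurable_wrt M H Z"
  unfolding measurable_wrt_def by auto

lemma measurable_wrt_iff_sigma:
  assumes "sigma_algebra (space M) G"
  shows "measurable_wrt M G f \<longleftrightarrow> f \<in> borel_measurable (sigma (space M) G)"
proof -
  interpret sigma_algebra "space M" G by (rule assms)
  have "G \<subseteq> Pow (space M)" using sets_into_space by auto
  then show ?thesis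
    unfolding measurable_wrt_def measurable_def using sigma_sets_eq by (auto simp: Pi_iff)
qed

lemma measurable_wrt_mult:
  "sigma_algebra (space M) G \<Longrightarrow> measurable_wrt M G f \<Longrightarrow> measurable_wrt M G g \<Longrightarrow>
    measurable_wrt M G (\<lambda>\<omega>. f \<omega> * g \<omega>)"
  by (simp add: measurable_wrt_iff_sigma)

lemma brownian_sheet_adapted:
  "brownian_sheet M F W \<Longrightarrow> 0 \<le> s \<Longrightarrow> s \<le> t \<Longrightarrow> measurable_wrt M (F t) (W s x)"
  unfolding brownian_sheet_def measurable_wrt_def filtration_on_def by blast

lemma measurable_wrt_rect_incr:
  assumes W: "brownian_sheet M F W" and "0 \<le> a" "a \<le> b" "b \<le> t"
  shows "measurable_wrt M (F t) (rect_incr W a b x y)"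
proof -
  have "W s z \<in> borel_measurable (sigma (space M) (F t))" if "s \<in> {a, b}" for s z
    using brownian_sheet_adapted[OF W, of s t z] that assms
    by (auto simp: measurable_wrt_iff_sigma[OF brownian_sheet_filtration(1)[OF W]])
  then show ?thesis
    unfolding measurable_wrt_iff_sigma[OF brownian_sheet_filtration(1)[OF W]] rect_incr_def
    by (intro borel_measurable_add borel_measurable_diff) auto
qed

lemma rect_incr_degenerate: "a = b \<or> x = y \<Longrightarrow> rect_incr W a b x y = (\<lambda>\<omega>. 0)"
  by (auto simp: rect_incr_def)

lemma rect_incr_split_time: "rect_incr W a c x y \<omega> = rect_incr W a b x y \<omega> + rect_incr W b c x y \<omega>"
  by (simp add: rect_incr_def)

lemma rect_incr_indep_var:
  assumes W: "brownian_sheet M F W" and a: "0 \<le> a" "a < b" and xy: "x < y"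
    and Z: "measurable_wrt M (F a) Z"
  shows "prob_space.indep_var M borel Z borel (rect_incr W a b x y)"
proof -
  interpret prob_space M using W by (rule brownian_sheet_prob_space)
  define D where "D = rect_incr W a b x y"
  define FF where "FF = (\<lambda>j. case j of None \<Rightarrow> F a
      | Some i \<Rightarrow> {rect_incr W a b ([x,y]!i) ([x,y]!Suc i) -` B \<inter> space M | B. B \<in> sets borel})"
  \<comment> \<open>the independence clause of \<open>brownian_sheet\<close> for the one-cell partition \<open>[x, y]\<close>\<close>
  have "sorted_wrt (<) [x, y]" using xy by simp
  then have "indep_sets FF (insert None (Some ` {..<length [x,y] - 1}))"
    using W a unfolding brownian_sheet_def FF_def by blast
  moreover have "insert None (Some ` {..<length [x,y] - 1}) = {None, Some 0}" by auto
  ultimately have ind: "indep_sets FF {None, Some 0}" by simp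
  have "W s z \<in> borel_measurable M" if "s \<in> {a, b}" for s z
    using measurable_wrt_borel_measurable[OF brownian_sheet_adapted[OF W, of s s z]
        brownian_sheet_filtration(2)[OF W]] that a by auto
  then have Dm: "D \<in> borel_measurable M" unfolding D_def rect_incr_def by auto
  have Zm: "Z \<in> borel_measurable M"
    using measurable_wrt_borel_measurable[OF Z brownian_sheet_filtration(2)[OF W]] .
  have eq: "(\<lambda>i. {case_bool Z D i -` A \<inter> space M |A. A \<in> sets (case_bool borel borel i)})
      = case_bool {Z -` A \<inter> space M |A. A \<in> sets borel} {D -` A \<inter> space M |A. A \<in> sets borel}"
    by (rule ext) (simp split: bool.split)
  have "indep_set {Z -` A \<inter> space M |A. A \<in> sets borel} {D -` A \<inter> space M |A. A \<in> sets borel}"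
    unfolding indep_sets2_eq
  proof (intro conjI ballI)
    show "{Z -` A \<inter> space M |A. A \<in> sets borel} \<subseteq> events"
      and "{D -` A \<inter> space M |A. A \<in> sets borel} \<subseteq> events" using Zm Dm by auto
    fix p q assume "p \<in> {Z -` A \<inter> space M |A. A \<in> sets borel}" "q \<in> {D -` A \<inter> space M |A. A \<in> sets borel}"
    then have "p \<in> FF None" "q \<in> FF (Some 0)" using Z unfolding FF_def D_def measurable_wrt_def by auto
    then show "prob (p \<inter> q) = prob p * prob q"
      using indep_setsD[OF ind, of "{None, Some 0}" "\<lambda>j. case j of None \<Rightarrow> p | Some _ \<Rightarrow> q"] by auto
  qed
  then have "indep_var borel Z borel D"
    unfolding indep_var_def indep_vars_def2 eq indep_set_def[symmetric]
    using Zm Dm by (auto split: bool.split)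
  then show ?thesis unfolding D_def .
qed

lemma rect_incr_moments:
  assumes W: "brownian_sheet M F W" and a: "0 \<le> a" "a < b" and xy: "x < y"
  shows "integrable M (rect_incr W a b x y)"
    and "integrable M (\<lambda>\<omega>. (rect_incr W a b x y \<omega>)^2)"
    and "(\<integral>\<omega>. rect_incr W a b x y \<omega> \<partial>M) = 0"
    and "(\<integral>\<omega>. (rect_incr W a b x y \<omega>)^2 \<partial>M) = (b - a) * (y - x)"
proof -
  interpret prob_space M using W by (rule brownian_sheet_prob_space)
  define \<sigma> where "\<sigma> = sqrt ((b - a) * (y - x))"
  have \<sigma>: "0 < \<sigma>" using a xy unfolding \<sigma>_def by simp
  have "sorted_wrt (<) [x, y]" using xy by simp
  then have "\<forall>i < length [x,y] - 1. distributed M lborel (rect_incr W a b ([x,y]!i) ([x,y]!Suc i))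
      (normal_density 0 (sqrt ((b - a) * ([x,y]!Suc i - [x,y]!i))))"
    using W a unfolding brownian_sheet_def by blast
  then have D: "distributed M lborel (rect_incr W a b x y) (normal_density 0 \<sigma>)"
    unfolding \<sigma>_def by simp
  show "integrable M (rect_incr W a b x y)"
    using distributed_integrable[OF D, of "\<lambda>x. x"] integrable_normal_moment[of \<sigma> 0 1] \<sigma> by simp
  show "integrable M (\<lambda>\<omega>. (rect_incr W a b x y \<omega>)^2)"
    using distributed_integrable[OF D, of "\<lambda>x. x^2"] integrable_normal_moment[of \<sigma> 0 2] \<sigma> by simp
  show "(\<integral>\<omega>. rect_incr W a b x y \<omega> \<partial>M) = 0"
    using normal_distributed_expectation[OF \<sigma> D] by simp
  then show "(\<integral>\<omega>. (rect_incr W a b x y \<omega>)^2 \<partial>M) = (b - a) * (y - x)"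
    using normal_distributed_variance[OF \<sigma> D] a xy unfolding \<sigma>_def by simp
qed

lemma rect_incr_integrable:
  assumes W: "brownian_sheet M F W" and "0 \<le> a" "a \<le> b" "x \<le> y"
  shows "integrable M (rect_incr W a b x y)"
    and "integrable M (\<lambda>\<omega>. (rect_incr W a b x y \<omega>)^2)"
  using rect_incr_moments(1,2)[OF W] rect_incr_degenerate[of a b x y W] assms
  by (cases "a < b \<and> x < y"; force)+

lemma integral_mult_rect_incr:
  assumes W: "brownian_sheet M F W" and "0 \<le> a" "a < b" "x < y"
    and Y: "measurable_wrt M (F a) Y" "integrable M Y"
  shows "(\<integral>\<omega>. Y \<omega> * rect_incr W a b x y \<omega> \<partial>M) = 0"
  using prob_space.indep_var_lebesgue_integral[OF brownian_sheet_prob_space[OF W]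
      rect_incr_indep_var[OF W assms(2-4) Y(1)] Y(2) rect_incr_moments(1)[OF W assms(2-4)]]
    rect_incr_moments(3)[OF W assms(2-4)] by simp

lemma integral_mult_rect_incr_sq:
  assumes W: "brownian_sheet M F W" and "0 \<le> a" "a < b" "x < y"
    and Y: "measurable_wrt M (F a) Y" "integrable M Y"
  shows "integrable M (\<lambda>\<omega>. Y \<omega> * (rect_incr W a b x y \<omega>)^2)"
    and "(\<integral>\<omega>. Y \<omega> * (rect_incr W a b x y \<omega>)^2 \<partial>M) = (\<integral>\<omega>. Y \<omega> \<partial>M) * ((b - a) * (y - x))"
proof -
  interpret prob_space M using W by (rule brownian_sheet_prob_space)
  have iv: "indep_var borel Y borel (\<lambda>\<omega>. (rect_incr W a b x y \<omega>)^2)"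
    using indep_var_compose[OF rect_incr_indep_var[OF W assms(2-4) Y(1)], of "\<lambda>x. x" borel "\<lambda>x. x^2" borel]
    by (simp add: comp_def)
  note m = rect_incr_moments[OF W assms(2-4)]
  show "integrable M (\<lambda>\<omega>. Y \<omega> * (rect_incr W a b x y \<omega>)^2)"
    using indep_var_integrable[OF iv Y(2) m(2)] .
  show "(\<integral>\<omega>. Y \<omega> * (rect_incr W a b x y \<omega>)^2 \<partial>M) = (\<integral>\<omega>. Y \<omega> \<partial>M) * ((b - a) * (y - x))"
    using indep_var_lebesgue_integral[OF iv Y(2) m(2)] m(4) by simp
qed

definition overlap :: "real \<Rightarrow> real \<Rightarrow> real \<Rightarrow> real \<Rightarrow> real" where
  "overlap a b a' b' = max 0 (min b b' - max a a')"

lemma overlap_commute: "overlap a b a' b' = overlap a' b' a b"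
  unfolding overlap_def by (simp add: min.commute max.commute)

lemma overlap_eq_abs:
  "x \<le> y \<Longrightarrow> x' \<le> y' \<Longrightarrow> overlap x y x' y' = (\<bar>y - x'\<bar> + \<bar>x - y'\<bar> - \<bar>y - y'\<bar> - \<bar>x - x'\<bar>) / 2"
  unfolding overlap_def by (auto simp: abs_if min_def max_def)

lemma integral_indicator_Ioc_mult:
  shows "integrable lborel (\<lambda>s::real. indicator {a<..b} s * indicator {a'<..b'} s :: real)"
    and "(\<integral>s. indicator {a<..b} s * indicator {a'<..b'} s \<partial>lborel) = overlap a b a' b'"
proof -
  have e: "(\<lambda>s::real. indicator {a<..b} s * indicator {a'<..b'} s :: real) = indicator {max a a'<..min b b'}"
    by (auto simp: indicator_def)
  show "integrable lborel (\<lambda>s::real. indicator {a<..b} s * indicator {a'<..b'} s :: real)"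
    unfolding e by (cases "max a a' \<le> min b b'") (auto simp: integrable_indicator_iff emeasure_lborel_Ioc)
  show "(\<integral>s. indicator {a<..b} s * indicator {a'<..b'} s \<partial>lborel) = overlap a b a' b'"
    unfolding e overlap_def by (cases "max a a' \<le> min b b'") (auto simp: max_def)
qed

lemma integrable_bounded_mult:
  fixes Z f :: "'a \<Rightarrow> real"
  assumes "Z \<in> borel_measurable M" "\<forall>\<omega>\<in>space M. \<bar>Z \<omega>\<bar> \<le> C" "integrable M f"
  shows "integrable M (\<lambda>\<omega>. Z \<omega> * f \<omega>)"
proof (rule Bochner_Integration.integrable_bound)
  show "integrable M (\<lambda>\<omega>. C * f \<omega>)" using assms by auto
  show "AE \<omega> in M. norm (Z \<omega> * f \<omega>) \<le> norm (C * f \<omega>)"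
    using assms(2) by (intro AE_I2) (auto simp: abs_mult intro!: mult_right_mono)
qed (use assms in auto)

lemma integrable_bounded_mult_rect_incr_mult:
  assumes W: "brownian_sheet M F W" and Z: "Z \<in> borel_measurable M" "\<forall>\<omega>\<in>space M. \<bar>Z \<omega>\<bar> \<le> C"
    and "0 \<le> a" "a \<le> b" "x \<le> y" and "0 \<le> a'" "a' \<le> b'" "x' \<le> y'"
  shows "integrable M (\<lambda>\<omega>. Z \<omega> * rect_incr W a b x y \<omega> * rect_incr W a' b' x' y' \<omega>)"
proof -
  note R = rect_incr_integrable(2)[OF W assms(4-6)] rect_incr_integrable(2)[OF W assms(7-9)]
  have prod_le: "\<bar>p * q\<bar> \<le> p^2 + q^2" for p q :: real
    using sum_squares_bound[of "\<bar>p\<bar>" "\<bar>q\<bar>"] by (simp add: abs_mult mult.assoc) (smt (verit) mult_nonneg_nonneg abs_ge_zero)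
  have "integrable M (\<lambda>\<omega>. rect_incr W a b x y \<omega> * rect_incr W a' b' x' y' \<omega>)"
  proof (rule Bochner_Integration.integrable_bound)
    show "integrable M (\<lambda>\<omega>. (rect_incr W a b x y \<omega>)^2 + (rect_incr W a' b' x' y' \<omega>)^2)"
      using R by auto
    show "AE \<omega> in M. norm (rect_incr W a b x y \<omega> * rect_incr W a' b' x' y' \<omega>)
        \<le> norm ((rect_incr W a b x y \<omega>)^2 + (rect_incr W a' b' x' y' \<omega>)^2)"
      using prod_le by (intro AE_I2) simp
  qed (use rect_incr_integrable(1)[OF W assms(4-6)] rect_incr_integrable(1)[OF W assms(7-9)] in auto)
  then show ?thesis
    using integrable_bounded_mult[OF Z] by (simp add: mult.assoc)
qed

lemma integral_rect_incr_mult_split_time: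
  assumes W: "brownian_sheet M F W" and Z: "Z \<in> borel_measurable M" "\<forall>\<omega>\<in>space M. \<bar>Z \<omega>\<bar> \<le> C"
    and "0 \<le> a" "a \<le> c" "c \<le> b" "x \<le> y" and "0 \<le> a'" "a' \<le> b'" "x' \<le> y'"
  shows "(\<integral>\<omega>. Z \<omega> * rect_incr W a b x y \<omega> * rect_incr W a' b' x' y' \<omega> \<partial>M)
       = (\<integral>\<omega>. Z \<omega> * rect_incr W a c x y \<omega> * rect_incr W a' b' x' y' \<omega> \<partial>M)
       + (\<integral>\<omega>. Z \<omega> * rect_incr W c b x y \<omega> * rect_incr W a' b' x' y' \<omega> \<partial>M)"
proof -
  have "(\<lambda>\<omega>. Z \<omega> * rect_incr W a b x y \<omega> * rect_incr W a' b' x' y' \<omega>)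
      = (\<lambda>\<omega>. Z \<omega> * rect_incr W a c x y \<omega> * rect_incr W a' b' x' y' \<omega>
          + Z \<omega> * rect_incr W c b x y \<omega> * rect_incr W a' b' x' y' \<omega>)"
    by (simp add: rect_incr_split_time[of W a b x y _ c] algebra_simps)
  moreover note integrable_bounded_mult_rect_incr_mult[OF W Z]
  ultimately show ?thesis using assms(4-) by simp
qed

lemma integral_rect_incr_mult_disjoint:
  assumes W: "brownian_sheet M F W" and "0 \<le> a" "a \<le> b" "b \<le> a'" "a' \<le> b'" "x \<le> y" "x' \<le> y'"
    and Z: "measurable_wrt M (F a') Z" "\<forall>\<omega>\<in>space M. \<bar>Z \<omega>\<bar> \<le> C"
  shows "(\<integral>\<omega>. Z \<omega> * rect_incr W a b x y \<omega> * rect_incr W a' b' x' y' \<omega> \<partial>M) = 0"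
proof (cases "a' < b' \<and> x' < y'")
  case False
  then have "rect_incr W a' b' x' y' = (\<lambda>\<omega>. 0)"
    by (intro rect_incr_degenerate) (use assms in auto)
  then show ?thesis by simp
next
  case True
  have "measurable_wrt M (F a') (\<lambda>\<omega>. Z \<omega> * rect_incr W a b x y \<omega>)"
    using measurable_wrt_mult[OF brownian_sheet_filtration(1)[OF W] Z(1)
        measurable_wrt_rect_incr[OF W assms(2-4)]] .
  moreover have "integrable M (\<lambda>\<omega>. Z \<omega> * rect_incr W a b x y \<omega>)"
    using integrable_bounded_mult[OF measurable_wrt_borel_measurable[OF Z(1)
          brownian_sheet_filtration(2)[OF W]] Z(2) rect_incr_integrable(1)[OF W assms(2,3,6)]] .
  ultimately show ?thesis using integral_mult_rect_incr[OF W _ _ _] assms True by auto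
qed

lemma integral_rect_incr_mult_same_time:
  assumes W: "brownian_sheet M F W" and a: "0 \<le> a" "a < b" and xy: "x \<le> y" "x' \<le> y'"
    and Z: "measurable_wrt M (F a) Z" "\<forall>\<omega>\<in>space M. \<bar>Z \<omega>\<bar> \<le> C"
  shows "(\<integral>\<omega>. Z \<omega> * rect_incr W a b x y \<omega> * rect_incr W a b x' y' \<omega> \<partial>M)
       = (\<integral>\<omega>. Z \<omega> \<partial>M) * (b - a) * overlap x y x' y'"
proof -
  have Zm: "Z \<in> borel_measurable M"
    using measurable_wrt_borel_measurable[OF Z(1) brownian_sheet_filtration(2)[OF W]] .
  interpret prob_space M using W by (rule brownian_sheet_prob_space)
  have Zi: "integrable M Z" using Zm Z(2) by (intro integrable_const_bound[where B=C]) auto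
  define G where "G p \<omega> = W b p \<omega> - W a p \<omega>" for p \<omega>
  have R: "rect_incr W a b p q \<omega> = G q \<omega> - G p \<omega>" for p q \<omega> unfolding G_def rect_incr_def by simp
  have Q: "integrable M (\<lambda>\<omega>. Z \<omega> * (G q \<omega> - G p \<omega>)^2) \<and>
      (\<integral>\<omega>. Z \<omega> * (G q \<omega> - G p \<omega>)^2 \<partial>M) = (\<integral>\<omega>. Z \<omega> \<partial>M) * ((b - a) * \<bar>q - p\<bar>)" for p q
  proof (cases p q rule: linorder_cases)
    case less
    then show ?thesis using integral_mult_rect_incr_sq[OF W a less Z(1) Zi] unfolding R by simp
  next
    case greater
    have "(G q \<omega> - G p \<omega>)^2 = (rect_incr W a b q p \<omega>)^2" for \<omega> unfolding R by (simp add: power2_commute)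
    then show ?thesis using integral_mult_rect_incr_sq[OF W a greater Z(1) Zi] greater by simp
  qed simp
  \<comment> \<open>polarization: the product of two increments of \<open>G\<close> is a signed sum of four squared increments\<close>
  have "(\<integral>\<omega>. Z \<omega> * rect_incr W a b x y \<omega> * rect_incr W a b x' y' \<omega> \<partial>M)
      = (\<integral>\<omega>. (Z \<omega> * (G y \<omega> - G x' \<omega>)^2 + Z \<omega> * (G x \<omega> - G y' \<omega>)^2
               - Z \<omega> * (G y \<omega> - G y' \<omega>)^2 - Z \<omega> * (G x \<omega> - G x' \<omega>)^2) / 2 \<partial>M)"
    unfolding R by (rule Bochner_Integration.integral_cong) (simp_all add: power2_eq_square algebra_simps)
  also have "\<dots> = ((\<integral>\<omega>. Z \<omega> * (G y \<omega> - G x' \<omega>)^2 \<partial>M) + (\<integral>\<omega>. Z \<omega> * (G x \<omega> - G y' \<omega>)^2 \<partial>M)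
      - (\<integral>\<omega>. Z \<omega> * (G y \<omega> - G y' \<omega>)^2 \<partial>M) - (\<integral>\<omega>. Z \<omega> * (G x \<omega> - G x' \<omega>)^2 \<partial>M)) / 2"
    using Q by (simp add: integral_divide_zero)
  also have "\<dots> = (\<integral>\<omega>. Z \<omega> \<partial>M) * (b - a) * ((\<bar>y - x'\<bar> + \<bar>x - y'\<bar> - \<bar>y - y'\<bar> - \<bar>x - x'\<bar>) / 2)"
  proof -
    have q: "(\<integral>\<omega>. Z \<omega> * (G q \<omega> - G p \<omega>)^2 \<partial>M) = (\<integral>\<omega>. Z \<omega> \<partial>M) * ((b - a) * \<bar>q - p\<bar>)" for p q
      using Q by blast
    show ?thesis unfolding q by (simp add: algebra_simps abs_minus_commute)
  qed
  also have "\<dots> = (\<integral>\<omega>. Z \<omega> \<partial>M) * (b - a) * overlap x y x' y'"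
    using overlap_eq_abs[OF xy] by simp
  finally show ?thesis .
qed

lemma integral_rect_incr_mult_same_start:
  assumes W: "brownian_sheet M F W" and "0 \<le> a" "a \<le> b" "a \<le> b'" "x \<le> y" "x' \<le> y'"
    and Z: "measurable_wrt M (F a) Z" "\<forall>\<omega>\<in>space M. \<bar>Z \<omega>\<bar> \<le> C"
  shows "(\<integral>\<omega>. Z \<omega> * rect_incr W a b x y \<omega> * rect_incr W a b' x' y' \<omega> \<partial>M)
       = (\<integral>\<omega>. Z \<omega> \<partial>M) * overlap a b a b' * overlap x y x' y'"
proof -
  have Zm: "Z \<in> borel_measurable M"
    using measurable_wrt_borel_measurable[OF Z(1) brownian_sheet_filtration(2)[OF W]] .
  have shorter_first: "(\<integral>\<omega>. Z \<omega> * rect_incr W a b p q \<omega> * rect_incr W a b' p' q' \<omega> \<partial>M)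
       = (\<integral>\<omega>. Z \<omega> \<partial>M) * (b - a) * overlap p q p' q'"
    if "a \<le> b" "b \<le> b'" "p \<le> q" "p' \<le> q'" for b b' p q p' q'
  proof (cases "a = b")
    case True
    then show ?thesis using rect_incr_degenerate[of a b p q W] by simp
  next
    case False
    have "(\<integral>\<omega>. Z \<omega> * rect_incr W a b p q \<omega> * rect_incr W a b' p' q' \<omega> \<partial>M)
        = (\<integral>\<omega>. Z \<omega> * rect_incr W a b' p' q' \<omega> * rect_incr W a b p q \<omega> \<partial>M)"
      by (simp add: ac_simps)
    also have "\<dots> = (\<integral>\<omega>. Z \<omega> * rect_incr W a b p' q' \<omega> * rect_incr W a b p q \<omega> \<partial>M)
        + (\<integral>\<omega>. Z \<omega> * rect_incr W a b p q \<omega> * rect_incr W b b' p' q' \<omega> \<partial>M)"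
      using integral_rect_incr_mult_split_time[OF W Zm Z(2), of a b b' p' q' a b p q] assms(2) that
      by (simp add: ac_simps)
    also have "(\<integral>\<omega>. Z \<omega> * rect_incr W a b p q \<omega> * rect_incr W b b' p' q' \<omega> \<partial>M) = 0"
      using integral_rect_incr_mult_disjoint[OF W assms(2) that(1) order_refl that(2-4)
          measurable_wrt_mono[OF Z(1) brownian_sheet_filtration(3)[OF W that(1)]] Z(2)] .
    finally show ?thesis
      using integral_rect_incr_mult_same_time[OF W assms(2) _ that(4,3) Z] False that
      by (simp add: overlap_commute[of p' q' p q])
  qed
  show ?thesis
  proof (cases "b \<le> b'")
    case True
    then show ?thesis using shorter_first[of b b' x y x' y'] assms by (simp add: overlap_def)
  next
    case False
    have "overlap a b a b' = b' - a" using False assms by (simp add: overlap_def)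
    moreover have "(\<integral>\<omega>. Z \<omega> * rect_incr W a b x y \<omega> * rect_incr W a b' x' y' \<omega> \<partial>M)
        = (\<integral>\<omega>. Z \<omega> * rect_incr W a b' x' y' \<omega> * rect_incr W a b x y \<omega> \<partial>M)"
      by (simp add: ac_simps)
    ultimately show ?thesis using shorter_first[of b' b x' y' x y] False assms
      by (simp add: overlap_commute[of x' y' x y])
  qed
qed

lemma integral_rect_incr_mult:
  assumes W: "brownian_sheet M F W" and "0 \<le> a" "a \<le> b" "0 \<le> a'" "a' \<le> b'" "x \<le> y" "x' \<le> y'"
    and Z: "measurable_wrt M (F (max a a')) Z" "\<forall>\<omega>\<in>space M. \<bar>Z \<omega>\<bar> \<le> C"
  shows "(\<integral>\<omega>. Z \<omega> * rect_incr W a b x y \<omega> * rect_incr W a' b' x' y' \<omega> \<partial>M)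
       = (\<integral>\<omega>. Z \<omega> \<partial>M) * overlap a b a' b' * overlap x y x' y'"
proof -
  have earlier_first: "(\<integral>\<omega>. Z \<omega> * rect_incr W a b x y \<omega> * rect_incr W a' b' x' y' \<omega> \<partial>M)
       = (\<integral>\<omega>. Z \<omega> \<partial>M) * overlap a b a' b' * overlap x y x' y'"
    if "0 \<le> a" "a \<le> b" "a \<le> a'" "a' \<le> b'" "x \<le> y" "x' \<le> y'" "measurable_wrt M (F a') Z"
    for a b a' b' x y x' y'
  proof (cases "b \<le> a'")
    case True
    then show ?thesis
      using integral_rect_incr_mult_disjoint[OF W that(1,2) True that(4-7) Z(2)] that
      by (simp add: overlap_def)
  next
    case False
    have Zm: "Z \<in> borel_measurable M"
      using measurable_wrt_borel_measurable[OF that(7) brownian_sheet_filtration(2)[OF W]] .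
    have "(\<integral>\<omega>. Z \<omega> * rect_incr W a b x y \<omega> * rect_incr W a' b' x' y' \<omega> \<partial>M)
        = (\<integral>\<omega>. Z \<omega> * rect_incr W a a' x y \<omega> * rect_incr W a' b' x' y' \<omega> \<partial>M)
        + (\<integral>\<omega>. Z \<omega> * rect_incr W a' b x y \<omega> * rect_incr W a' b' x' y' \<omega> \<partial>M)"
      using integral_rect_incr_mult_split_time[OF W Zm Z(2), of a a' b x y a' b' x' y'] that False by simp
    also have "(\<integral>\<omega>. Z \<omega> * rect_incr W a a' x y \<omega> * rect_incr W a' b' x' y' \<omega> \<partial>M) = 0"
      using integral_rect_incr_mult_disjoint[OF W that(1,3) order_refl that(4-7) Z(2)] .
    also have "overlap a b a' b' = overlap a' b a' b'" using that unfolding overlap_def by auto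
    ultimately show ?thesis
      using integral_rect_incr_mult_same_start[OF W _ _ that(4-7) Z(2)] that False by simp
  qed
  show ?thesis
  proof (cases "a \<le> a'")
    case True
    then show ?thesis using earlier_first[of a b a' b' x y x' y'] assms Z(1) by (simp add: max_def)
  next
    case False
    have "(\<integral>\<omega>. Z \<omega> * rect_incr W a b x y \<omega> * rect_incr W a' b' x' y' \<omega> \<partial>M)
        = (\<integral>\<omega>. Z \<omega> * rect_incr W a' b' x' y' \<omega> * rect_incr W a b x y \<omega> \<partial>M)"
      by (simp add: ac_simps)
    then show ?thesis using earlier_first[of a' b' a b x' y' x y] False assms Z(1)
      by (simp add: max_def overlap_commute[of a' b' a b] overlap_commute[of x' y' x y])
  qed
qed

section \<open>The Walsh isometry\<close>

lemma integral_double_sum: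
  fixes c d :: "nat \<Rightarrow> nat \<Rightarrow> real" and f :: "nat \<Rightarrow> nat \<Rightarrow> 'a \<Rightarrow> real"
  assumes "\<And>j k. j < n \<Longrightarrow> k < n \<Longrightarrow> integrable N (f j k)"
    and "\<And>j k. j < n \<Longrightarrow> k < n \<Longrightarrow> (\<integral>z. f j k z \<partial>N) = d j k"
  shows "integrable N (\<lambda>z. \<Sum>j<n. \<Sum>k<n. c j k * f j k z)"
    and "(\<integral>z. (\<Sum>j<n. \<Sum>k<n. c j k * f j k z) \<partial>N) = (\<Sum>j<n. \<Sum>k<n. c j k * d j k)"
proof -
  show "integrable N (\<lambda>z. \<Sum>j<n. \<Sum>k<n. c j k * f j k z)"
    using assms(1) by (intro Bochner_Integration.integrable_sum integrable_mult_right) auto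
  have "(\<integral>z. (\<Sum>k<n. c j k * f j k z) \<partial>N) = (\<Sum>k<n. c j k * d j k)" if "j < n" for j
    using assms that by (subst Bochner_Integration.integral_sum) auto
  then show "(\<integral>z. (\<Sum>j<n. \<Sum>k<n. c j k * f j k z) \<partial>N) = (\<Sum>j<n. \<Sum>k<n. c j k * d j k)"
    using assms(1) by (subst Bochner_Integration.integral_sum) (auto intro!: Bochner_Integration.integrable_sum)
qed

lemma simple_pred_coeff:
  assumes "simple_pred M F n X a b x y" and "k < n"
  shows "0 \<le> a k" "a k < b k" "x k < y k" "measurable_wrt M (F (a k)) (X k)"
    and "\<exists>C. \<forall>\<omega>\<in>space M. \<bar>X k \<omega>\<bar> \<le> C"
  using assms unfolding simple_pred_def measurable_wrt_def by auto

lemma simple_pred_coeff_mult: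
  assumes W: "brownian_sheet M F W" and sp: "simple_pred M F n X a b x y" and "j < n" "k < n"
  obtains C where "measurable_wrt M (F (max (a j) (a k))) (\<lambda>\<omega>. X j \<omega> * X k \<omega>)"
    and "\<forall>\<omega>\<in>space M. \<bar>X j \<omega> * X k \<omega>\<bar> \<le> C" and "integrable M (\<lambda>\<omega>. X j \<omega> * X k \<omega>)"
proof -
  interpret prob_space M using W by (rule brownian_sheet_prob_space)
  obtain Cj Ck where C: "\<forall>\<omega>\<in>space M. \<bar>X j \<omega>\<bar> \<le> Cj" "\<forall>\<omega>\<in>space M. \<bar>X k \<omega>\<bar> \<le> Ck"
    using simple_pred_coeff(5)[OF sp] assms(3,4) by metis
  have "measurable_wrt M (F (max (a j) (a k))) (X j)" "measurable_wrt M (F (max (a j) (a k))) (X k)"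
    by (rule measurable_wrt_mono[OF simple_pred_coeff(4)[OF sp assms(3)] brownian_sheet_filtration(3)[OF W]],
        simp)
      (rule measurable_wrt_mono[OF simple_pred_coeff(4)[OF sp assms(4)] brownian_sheet_filtration(3)[OF W]],
        simp)
  then have meas: "measurable_wrt M (F (max (a j) (a k))) (\<lambda>\<omega>. X j \<omega> * X k \<omega>)"
    by (rule measurable_wrt_mult[OF brownian_sheet_filtration(1)[OF W]])
  moreover have bound: "\<forall>\<omega>\<in>space M. \<bar>X j \<omega> * X k \<omega>\<bar> \<le> Cj * Ck"
    using C by (auto simp: abs_mult intro!: mult_mono order_trans[OF abs_ge_zero])
  moreover have "integrable M (\<lambda>\<omega>. X j \<omega> * X k \<omega>)"
    using measurable_wrt_borel_measurable[OF meas brownian_sheet_filtration(2)[OF W]] bound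
    by (intro integrable_const_bound[where B="Cj * Ck"]) auto
  ultimately show ?thesis using that by blast
qed

lemma nn_integral_simple_fun_st_sq:
  fixes n :: nat and X :: "nat \<Rightarrow> 'a \<Rightarrow> real" and a b x y :: "nat \<Rightarrow> real"
  defines "S \<equiv> \<lambda>\<omega>. \<Sum>j<n. \<Sum>k<n. X j \<omega> * X k \<omega> * overlap (a j) (b j) (a k) (b k) * overlap (x j) (y j) (x k) (y k)"
  shows "0 \<le> S \<omega>"
    and "(\<integral>\<^sup>+s. \<integral>\<^sup>+z. ennreal ((simple_fun_st n X a b x y s z \<omega>)^2) \<partial>lborel \<partial>lborel) = ennreal (S \<omega>)"
proof -
  define I where "I k s = (indicator {a k<..b k} s :: real)" for k s
  define J where "J k z = (indicator {x k<..y k} z :: real)" for k z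
  define c where "c j k = X j \<omega> * X k \<omega>" for j k
  have sq: "(simple_fun_st n X a b x y s z \<omega>)^2 = (\<Sum>j<n. \<Sum>k<n. (c j k * I j s * I k s) * (J j z * J k z))" for s z
    unfolding simple_fun_st_def power2_eq_square sum_product c_def I_def J_def by (simp add: ac_simps)
  define g where "g s = (\<Sum>j<n. \<Sum>k<n. (c j k * overlap (x j) (y j) (x k) (y k)) * (I j s * I k s))" for s
  have z_int: "integrable lborel (\<lambda>z. (simple_fun_st n X a b x y s z \<omega>)^2)"
    "(\<integral>z. (simple_fun_st n X a b x y s z \<omega>)^2 \<partial>lborel) = g s" for s
    using integral_double_sum[of n lborel "\<lambda>j k z. J j z * J k z" "\<lambda>j k. overlap (x j) (y j) (x k) (y k)"]
      integral_indicator_Ioc_mult unfolding sq g_def J_def by (auto simp: ac_simps)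
  have g_nonneg: "0 \<le> g s" for s
    using z_int(2)[of s] Bochner_Integration.integral_nonneg[of lborel "\<lambda>z. (simple_fun_st n X a b x y s z \<omega>)^2"]
    by simp
  have g_int: "integrable lborel g"
    "(\<integral>s. g s \<partial>lborel) = (\<Sum>j<n. \<Sum>k<n. (c j k * overlap (x j) (y j) (x k) (y k)) * overlap (a j) (b j) (a k) (b k))"
    using integral_double_sum[of n lborel "\<lambda>j k s. I j s * I k s" "\<lambda>j k. overlap (a j) (b j) (a k) (b k)"
        "\<lambda>j k. c j k * overlap (x j) (y j) (x k) (y k)"]
      integral_indicator_Ioc_mult unfolding g_def I_def by simp_all
  moreover have "(\<Sum>j<n. \<Sum>k<n. (c j k * overlap (x j) (y j) (x k) (y k)) * overlap (a j) (b j) (a k) (b k))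
      = S \<omega>" unfolding S_def c_def by (simp add: ac_simps)
  ultimately have s_int: "integrable lborel g" "(\<integral>s. g s \<partial>lborel) = S \<omega>" by simp_all
  show "0 \<le> S \<omega>"
    using s_int(2) Bochner_Integration.integral_nonneg[of lborel g] g_nonneg by simp
  have "(\<integral>\<^sup>+s. \<integral>\<^sup>+z. ennreal ((simple_fun_st n X a b x y s z \<omega>)^2) \<partial>lborel \<partial>lborel)
      = (\<integral>\<^sup>+s. ennreal (g s) \<partial>lborel)"
    using z_int by (intro nn_integral_cong) (simp add: nn_integral_eq_integral)
  also have "\<dots> = ennreal (S \<omega>)"
    using s_int g_nonneg by (simp add: nn_integral_eq_integral)
  finally show "(\<integral>\<^sup>+s. \<integral>\<^sup>+z. ennreal ((simple_fun_st n X a b x y s z \<omega>)^2) \<partial>lborel \<partial>lborel)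
      = ennreal (S \<omega>)" .
qed

lemma integral_simple_int_sq:
  assumes W: "brownian_sheet M F W" and sp: "simple_pred M F n X a b x y"
  shows "integrable M (\<lambda>\<omega>. (simple_int W n X a b x y \<omega>)^2)"
    and "(\<integral>\<omega>. (simple_int W n X a b x y \<omega>)^2 \<partial>M) = (\<Sum>j<n. \<Sum>k<n.
           (\<integral>\<omega>. X j \<omega> * X k \<omega> \<partial>M) * overlap (a j) (b j) (a k) (b k) * overlap (x j) (y j) (x k) (y k))"
proof -
  define R where "R k \<omega> = rect_incr W (a k) (b k) (x k) (y k) \<omega>" for k \<omega>
  have sq: "(simple_int W n X a b x y \<omega>)^2 = (\<Sum>j<n. \<Sum>k<n. 1 * (X j \<omega> * X k \<omega> * R j \<omega> * R k \<omega>))" for \<omega>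
    unfolding simple_int_def power2_eq_square sum_product R_def by (simp add: ac_simps)
  have pair: "integrable M (\<lambda>\<omega>. X j \<omega> * X k \<omega> * R j \<omega> * R k \<omega>) \<and>
      (\<integral>\<omega>. X j \<omega> * X k \<omega> * R j \<omega> * R k \<omega> \<partial>M)
        = (\<integral>\<omega>. X j \<omega> * X k \<omega> \<partial>M) * overlap (a j) (b j) (a k) (b k) * overlap (x j) (y j) (x k) (y k)"
    if jk: "j < n" "k < n" for j k
  proof -
    obtain C where meas: "measurable_wrt M (F (max (a j) (a k))) (\<lambda>\<omega>. X j \<omega> * X k \<omega>)"
      and bound: "\<forall>\<omega>\<in>space M. \<bar>X j \<omega> * X k \<omega>\<bar> \<le> C"
      using simple_pred_coeff_mult[OF W sp jk] by blast
    have "0 \<le> a i" "a i \<le> b i" "x i \<le> y i" if "i < n" for i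
      using simple_pred_coeff(1-3)[OF sp that] by auto
    then show ?thesis unfolding R_def
      using integrable_bounded_mult_rect_incr_mult[OF W measurable_wrt_borel_measurable[OF meas
          brownian_sheet_filtration(2)[OF W]] bound] integral_rect_incr_mult[OF W _ _ _ _ _ _ meas bound] jk
      by simp
  qed
  show "integrable M (\<lambda>\<omega>. (simple_int W n X a b x y \<omega>)^2)"
    and "(\<integral>\<omega>. (simple_int W n X a b x y \<omega>)^2 \<partial>M) = (\<Sum>j<n. \<Sum>k<n.
           (\<integral>\<omega>. X j \<omega> * X k \<omega> \<partial>M) * overlap (a j) (b j) (a k) (b k) * overlap (x j) (y j) (x k) (y k))"
    unfolding sq using pair integral_double_sum[of n M "\<lambda>j k \<omega>. X j \<omega> * X k \<omega> * R j \<omega> * R k \<omega>"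
        "\<lambda>j k. (\<integral>\<omega>. X j \<omega> * X k \<omega> \<partial>M) * overlap (a j) (b j) (a k) (b k) * overlap (x j) (y j) (x k) (y k)"
        "\<lambda>j k. 1"] by simp_all
qed

theorem simple_int_isometry:
  assumes W: "brownian_sheet M F W" and sp: "simple_pred M F n X a b x y"
  shows "(\<integral>\<^sup>+\<omega>. \<integral>\<^sup>+s. \<integral>\<^sup>+z. ennreal ((simple_fun_st n X a b x y s z \<omega>)^2) \<partial>lborel \<partial>lborel \<partial>M)
       = ennreal (\<integral>\<omega>. (simple_int W n X a b x y \<omega>)^2 \<partial>M)"
proof -
  define S where "S \<omega> = (\<Sum>j<n. \<Sum>k<n. X j \<omega> * X k \<omega> * overlap (a j) (b j) (a k) (b k) * overlap (x j) (y j) (x k) (y k))" for \<omega>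
  have "integrable M (\<lambda>\<omega>. X j \<omega> * X k \<omega>)" if "j < n" "k < n" for j k
    using simple_pred_coeff_mult[OF W sp that] by blast
  then have "integrable M S"
    "(\<integral>\<omega>. S \<omega> \<partial>M) = (\<Sum>j<n. \<Sum>k<n. (\<integral>\<omega>. X j \<omega> * X k \<omega> \<partial>M) * overlap (a j) (b j) (a k) (b k) * overlap (x j) (y j) (x k) (y k))"
    using integral_double_sum[where c = "\<lambda>j k. overlap (a j) (b j) (a k) (b k) * overlap (x j) (y j) (x k) (y k)"
        and f = "\<lambda>j k \<omega>. X j \<omega> * X k \<omega>" and N = M] unfolding S_def by (simp_all add: ac_simps)
  moreover have "(\<integral>\<^sup>+\<omega>. \<integral>\<^sup>+s. \<integral>\<^sup>+z. ennreal ((simple_fun_st n X a b x y s z \<omega>)^2) \<partial>lborel \<partial>lborel \<partial>M)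
      = (\<integral>\<^sup>+\<omega>. ennreal (S \<omega>) \<partial>M)"
    unfolding S_def by (intro nn_integral_cong nn_integral_simple_fun_st_sq(2))
  moreover have "0 \<le> S \<omega>" for \<omega> unfolding S_def by (rule nn_integral_simple_fun_st_sq(1))
  ultimately show ?thesis
    using integral_simple_int_sq(2)[OF W sp] by (simp add: nn_integral_eq_integral)
qed

lemma power2_add_le_weighted:
  fixes p q \<eta> :: real
  assumes "0 < \<eta>"
  shows "(p + q)^2 \<le> (1 + \<eta>) * p^2 + (1 + 1/\<eta>) * q^2"
proof -
  have "2 * p * q \<le> \<eta> * p^2 + q^2 / \<eta>"
    using sum_squares_bound[of "sqrt \<eta> * p" "q / sqrt \<eta>"] assms
    by (simp add: power_mult_distrib power_divide)
  then show ?thesis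
    by (simp add: power2_eq_square algebra_simps add_divide_distrib)
qed

lemma nn_integral_power2_add_le:
  fixes f g :: "'a \<Rightarrow> real"
  assumes "f \<in> borel_measurable M" "g \<in> borel_measurable M" "0 < \<eta>"
  shows "(\<integral>\<^sup>+\<omega>. ennreal ((f \<omega> + g \<omega>)^2) \<partial>M)
      \<le> ennreal (1 + \<eta>) * (\<integral>\<^sup>+\<omega>. ennreal ((f \<omega>)^2) \<partial>M) + ennreal (1 + 1/\<eta>) * (\<integral>\<^sup>+\<omega>. ennreal ((g \<omega>)^2) \<partial>M)"
proof -
  have "(\<integral>\<^sup>+\<omega>. ennreal ((f \<omega> + g \<omega>)^2) \<partial>M)
      \<le> (\<integral>\<^sup>+\<omega>. ennreal (1 + \<eta>) * ennreal ((f \<omega>)^2) + ennreal (1 + 1/\<eta>) * ennreal ((g \<omega>)^2) \<partial>M)"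
    using power2_add_le_weighted[OF assms(3)] assms(3)
    by (intro nn_integral_mono) (simp add: ennreal_mult[symmetric] ennreal_plus[symmetric] del: ennreal_plus)
  also have "\<dots> = ennreal (1 + \<eta>) * (\<integral>\<^sup>+\<omega>. ennreal ((f \<omega>)^2) \<partial>M) + ennreal (1 + 1/\<eta>) * (\<integral>\<^sup>+\<omega>. ennreal ((g \<omega>)^2) \<partial>M)"
    using assms by (simp add: nn_integral_add nn_integral_cmult)
  finally show ?thesis .
qed

definition iterated_nn_integral :: "'a measure \<Rightarrow> (real \<times> real \<times> 'a \<Rightarrow> ennreal) \<Rightarrow> ennreal" where
  "iterated_nn_integral M H = (\<integral>\<^sup>+\<omega>. \<integral>\<^sup>+s. \<integral>\<^sup>+z. H (s, z, \<omega>) \<partial>lborel \<partial>lborel \<partial>M)"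

lemma iterated_nn_integral_measurable:
  assumes [measurable]: "H \<in> borel_measurable (lborel \<Otimes>\<^sub>M lborel \<Otimes>\<^sub>M M)"
  shows "\<omega> \<in> space M \<Longrightarrow> (\<lambda>z. H (s, z, \<omega>)) \<in> borel_measurable lborel"
    and "\<omega> \<in> space M \<Longrightarrow> (\<lambda>s. \<integral>\<^sup>+z. H (s, z, \<omega>) \<partial>lborel) \<in> borel_measurable lborel"
    and "(\<lambda>\<omega>. \<integral>\<^sup>+s. \<integral>\<^sup>+z. H (s, z, \<omega>) \<partial>lborel \<partial>lborel) \<in> borel_measurable M"
proof -
  show "\<omega> \<in> space M \<Longrightarrow> (\<lambda>z. H (s, z, \<omega>)) \<in> borel_measurable lborel" by measurable
  show "\<omega> \<in> space M \<Longrightarrow> (\<lambda>s. \<integral>\<^sup>+z. H (s, z, \<omega>) \<partial>lborel) \<in> borel_measurable lborel"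
  proof -
    assume "\<omega> \<in> space M"
    then have "(\<lambda>(s, z). H (s, z, \<omega>)) \<in> borel_measurable (lborel \<Otimes>\<^sub>M lborel)" by measurable
    then show ?thesis by (rule lborel.borel_measurable_nn_integral)
  qed
  have "(\<lambda>(p, z). H (snd p, z, fst p)) \<in> borel_measurable ((M \<Otimes>\<^sub>M lborel) \<Otimes>\<^sub>M lborel)" by measurable
  then have "(\<lambda>p. \<integral>\<^sup>+z. H (snd p, z, fst p) \<partial>lborel) \<in> borel_measurable (M \<Otimes>\<^sub>M lborel)"
    by (rule lborel.borel_measurable_nn_integral)
  then have "(\<lambda>(\<omega>, s). \<integral>\<^sup>+z. H (s, z, \<omega>) \<partial>lborel) \<in> borel_measurable (M \<Otimes>\<^sub>M lborel)"
    by (simp add: case_prod_beta')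
  then show "(\<lambda>\<omega>. \<integral>\<^sup>+s. \<integral>\<^sup>+z. H (s, z, \<omega>) \<partial>lborel \<partial>lborel) \<in> borel_measurable M"
    by (rule lborel.borel_measurable_nn_integral)
qed

lemma iterated_nn_integral_add:
  assumes "H1 \<in> borel_measurable (lborel \<Otimes>\<^sub>M lborel \<Otimes>\<^sub>M M)" "H2 \<in> borel_measurable (lborel \<Otimes>\<^sub>M lborel \<Otimes>\<^sub>M M)"
  shows "iterated_nn_integral M (\<lambda>p. H1 p + H2 p) = iterated_nn_integral M H1 + iterated_nn_integral M H2"
  unfolding iterated_nn_integral_def
  using iterated_nn_integral_measurable[OF assms(1)] iterated_nn_integral_measurable[OF assms(2)]
  by (simp add: nn_integral_add cong: nn_integral_cong)

lemma iterated_nn_integral_cmult: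
  assumes "H \<in> borel_measurable (lborel \<Otimes>\<^sub>M lborel \<Otimes>\<^sub>M M)"
  shows "iterated_nn_integral M (\<lambda>p. c * H p) = c * iterated_nn_integral M H"
  unfolding iterated_nn_integral_def
  using iterated_nn_integral_measurable[OF assms]
  by (simp add: nn_integral_cmult cong: nn_integral_cong)

lemma iterated_nn_integral_mono:
  "(\<And>p. H1 p \<le> H2 p) \<Longrightarrow> iterated_nn_integral M H1 \<le> iterated_nn_integral M H2"
  unfolding iterated_nn_integral_def by (intro nn_integral_mono) auto

lemma iterated_nn_integral_power2_add_le:
  fixes f g :: "real \<Rightarrow> real \<Rightarrow> 'a \<Rightarrow> real"
  assumes f: "(\<lambda>(s, z, \<omega>). f s z \<omega>) \<in> borel_measurable (lborel \<Otimes>\<^sub>M lborel \<Otimes>\<^sub>M M)"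
    and g: "(\<lambda>(s, z, \<omega>). g s z \<omega>) \<in> borel_measurable (lborel \<Otimes>\<^sub>M lborel \<Otimes>\<^sub>M M)" and "0 < \<eta>"
  shows "iterated_nn_integral M (\<lambda>(s, z, \<omega>). ennreal ((f s z \<omega> + g s z \<omega>)^2))
    \<le> ennreal (1 + \<eta>) * iterated_nn_integral M (\<lambda>(s, z, \<omega>). ennreal ((f s z \<omega>)^2))
      + ennreal (1 + 1/\<eta>) * iterated_nn_integral M (\<lambda>(s, z, \<omega>). ennreal ((g s z \<omega>)^2))"
proof -
  have [measurable]: "(\<lambda>p. f (fst p) (fst (snd p)) (snd (snd p))) \<in> borel_measurable (lborel \<Otimes>\<^sub>M lborel \<Otimes>\<^sub>M M)"
    "(\<lambda>p. g (fst p) (fst (snd p)) (snd (snd p))) \<in> borel_measurable (lborel \<Otimes>\<^sub>M lborel \<Otimes>\<^sub>M M)"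
    using f g by (simp_all add: case_prod_beta')
  have "iterated_nn_integral M (\<lambda>(s, z, \<omega>). ennreal ((f s z \<omega> + g s z \<omega>)^2))
    \<le> iterated_nn_integral M (\<lambda>p. ennreal (1 + \<eta>) * (case p of (s, z, \<omega>) \<Rightarrow> ennreal ((f s z \<omega>)^2))
        + ennreal (1 + 1/\<eta>) * (case p of (s, z, \<omega>) \<Rightarrow> ennreal ((g s z \<omega>)^2)))"
    using power2_add_le_weighted[OF assms(3)] assms(3)
    by (intro iterated_nn_integral_mono)
      (auto simp: ennreal_mult[symmetric] ennreal_plus[symmetric] simp del: ennreal_plus)
  also have "\<dots> = ennreal (1 + \<eta>) * iterated_nn_integral M (\<lambda>(s, z, \<omega>). ennreal ((f s z \<omega>)^2))
      + ennreal (1 + 1/\<eta>) * iterated_nn_integral M (\<lambda>(s, z, \<omega>). ennreal ((g s z \<omega>)^2))"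
    by (subst iterated_nn_integral_add) (simp_all add: case_prod_beta' iterated_nn_integral_cmult)
  finally show ?thesis .
qed

lemma simple_fun_st_measurable:
  assumes W: "brownian_sheet M F W" and sp: "simple_pred M F n X a b x y"
  shows "(\<lambda>(s, z, \<omega>). simple_fun_st n X a b x y s z \<omega>) \<in> borel_measurable (lborel \<Otimes>\<^sub>M lborel \<Otimes>\<^sub>M M)"
proof -
  have "(\<lambda>p. \<Sum>k<n. X k (snd (snd p)) * indicator {a k<..b k} (fst p) * indicator {x k<..y k} (fst (snd p)))
      \<in> borel_measurable (lborel \<Otimes>\<^sub>M lborel \<Otimes>\<^sub>M M)"
  proof (rule borel_measurable_sum)
    fix k assume "k \<in> {..<n}"
    then have "k < n" by simp
    have [measurable]: "X k \<in> borel_measurable M"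
      using measurable_wrt_borel_measurable[OF simple_pred_coeff(4)[OF sp \<open>k < n\<close>]
          brownian_sheet_filtration(2)[OF W]] .
    show "(\<lambda>p. X k (snd (snd p)) * indicator {a k<..b k} (fst p) * indicator {x k<..y k} (fst (snd p)))
      \<in> borel_measurable (lborel \<Otimes>\<^sub>M lborel \<Otimes>\<^sub>M M)" by measurable
  qed
  then show ?thesis unfolding simple_fun_st_def by (simp add: case_prod_beta')
qed

lemma simple_int_measurable:
  assumes W: "brownian_sheet M F W" and sp: "simple_pred M F n X a b x y"
  shows "simple_int W n X a b x y \<in> borel_measurable M"
proof -
  have "(\<lambda>\<omega>. X k \<omega> * rect_incr W (a k) (b k) (x k) (y k) \<omega>) \<in> borel_measurable M" if "k < n" for k
    using measurable_wrt_borel_measurable[OF simple_pred_coeff(4)[OF sp that] brownian_sheet_filtration(2)[OF W]]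
      rect_incr_integrable(1)[OF W, of "a k" "b k" "x k" "y k"] simple_pred_coeff(1-3)[OF sp that]
    by (auto intro: borel_measurable_times)
  then show ?thesis unfolding simple_int_def by (simp add: borel_measurable_sum)
qed

lemma ennreal_le_of_le_mult_one_plus:
  fixes A B :: ennreal
  assumes "\<And>\<eta>::real. 0 < \<eta> \<Longrightarrow> A \<le> ennreal ((1 + \<eta>)^2) * B"
  shows "A \<le> B"
proof (cases B)
  case (real b)
  show ?thesis
  proof (rule ennreal_le_epsilon)
    fix e :: real assume "0 < e"
    define \<eta> where "\<eta> = min 1 (e / (3 * (b + 1)))"
    have \<eta>: "0 < \<eta>" "\<eta> \<le> 1" "\<eta> \<le> e / (3 * (b + 1))"
      using \<open>0 < e\<close> real by (auto simp: \<eta>_def)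
    have "(1 + \<eta>)^2 * b \<le> b + e"
    proof -
      have "(1 + \<eta>)^2 * b = b + \<eta> * (2 + \<eta>) * b" by (simp add: power2_eq_square algebra_simps)
      also have "\<eta> * (2 + \<eta>) * b \<le> \<eta> * 3 * (b + 1)"
        using \<eta> real by (intro mult_mono) (auto simp: mult_left_mono)
      also have "\<eta> * 3 * (b + 1) \<le> e" using \<eta>(3) real by (simp add: field_simps)
      finally show ?thesis by simp
    qed
    then have "ennreal ((1 + \<eta>)^2) * B \<le> B + ennreal e"
      using real \<open>0 < e\<close> by (simp add: ennreal_mult[symmetric] ennreal_plus[symmetric] del: ennreal_plus)
    then show "A \<le> B + ennreal e" using assms[OF \<eta>(1)] by (rule order_trans[rotated])
  qed
qed simp

lemma second_moment_le_simple_approx: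
  assumes W: "brownian_sheet M F W" and sp: "simple_pred M F n X a b x y"
    and f: "(\<lambda>(s, z, \<omega>). f s z \<omega>) \<in> borel_measurable (lborel \<Otimes>\<^sub>M lborel \<Otimes>\<^sub>M M)"
    and I: "I \<in> borel_measurable M" and \<eta>: "0 < \<eta>"
  shows "(\<integral>\<^sup>+\<omega>. ennreal ((I \<omega>)^2) \<partial>M)
    \<le> ennreal (1 + \<eta>) * (ennreal (1 + \<eta>) * iterated_nn_integral M (\<lambda>(s, z, \<omega>). ennreal ((f s z \<omega>)^2))
        + ennreal (1 + 1/\<eta>) * iterated_nn_integral M
            (\<lambda>(s, z, \<omega>). ennreal ((simple_fun_st n X a b x y s z \<omega> - f s z \<omega>)^2)))
      + ennreal (1 + 1/\<eta>) * (\<integral>\<^sup>+\<omega>. ennreal ((simple_int W n X a b x y \<omega> - I \<omega>)^2) \<partial>M)"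
    (is "_ \<le> ?c1 * (?c1 * ?B + ?c2 * ?e) + ?c2 * ?d")
proof -
  define \<phi> where "\<phi> = simple_fun_st n X a b x y"
  define S where "S = simple_int W n X a b x y"
  have \<phi>: "(\<lambda>(s, z, \<omega>). \<phi> s z \<omega> - f s z \<omega>) \<in> borel_measurable (lborel \<Otimes>\<^sub>M lborel \<Otimes>\<^sub>M M)"
    using simple_fun_st_measurable[OF W sp] f unfolding \<phi>_def case_prod_beta' by measurable
  have S: "S \<in> borel_measurable M" unfolding S_def by (rule simple_int_measurable[OF W sp])
  have "(\<integral>\<^sup>+\<omega>. ennreal ((S \<omega>)^2) \<partial>M) = ennreal (\<integral>\<omega>. (S \<omega>)^2 \<partial>M)"
    using integral_simple_int_sq(1)[OF W sp] unfolding S_def by (intro nn_integral_eq_integral) auto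
  also have "\<dots> = iterated_nn_integral M (\<lambda>(s, z, \<omega>). ennreal ((\<phi> s z \<omega>)^2))"
    using simple_int_isometry[OF W sp] unfolding iterated_nn_integral_def \<phi>_def S_def by simp
  also have "\<dots> \<le> ?c1 * ?B + ?c2 * ?e"
    using iterated_nn_integral_power2_add_le[OF f \<phi> \<eta>] unfolding \<phi>_def by simp
  finally have "?c1 * (\<integral>\<^sup>+\<omega>. ennreal ((S \<omega>)^2) \<partial>M) + ?c2 * ?d \<le> ?c1 * (?c1 * ?B + ?c2 * ?e) + ?c2 * ?d"
    by (intro add_right_mono mult_left_mono) auto
  moreover have "(\<integral>\<^sup>+\<omega>. ennreal ((I \<omega>)^2) \<partial>M) \<le> ?c1 * (\<integral>\<^sup>+\<omega>. ennreal ((S \<omega>)^2) \<partial>M) + ?c2 * ?d"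
    using nn_integral_power2_add_le[OF S borel_measurable_diff[OF I S] \<eta>]
    unfolding S_def by (simp add: power2_commute)
  ultimately show ?thesis by (rule order_trans[rotated])
qed

theorem stoch_int_second_moment_le:
  assumes W: "brownian_sheet M F W"
    and f: "(\<lambda>(s, z, \<omega>). f s z \<omega>) \<in> borel_measurable (lborel \<Otimes>\<^sub>M lborel \<Otimes>\<^sub>M M)"
    and I: "stoch_int M F W f I"
  shows "(\<integral>\<^sup>+\<omega>. ennreal ((I \<omega>)^2) \<partial>M) \<le> iterated_nn_integral M (\<lambda>(s, z, \<omega>). ennreal ((f s z \<omega>)^2))"
    (is "_ \<le> ?B")
proof -
  from I obtain n X a b x y where Im: "I \<in> borel_measurable M"
    and sp: "\<And>m. simple_pred M F (n m) (X m) (a m) (b m) (x m) (y m)"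
    and e0: "(\<lambda>m. \<integral>\<^sup>+\<omega>. \<integral>\<^sup>+s. \<integral>\<^sup>+z. ennreal ((simple_fun_st (n m) (X m) (a m) (b m) (x m) (y m) s z \<omega>
              - f s z \<omega>)^2) \<partial>lborel \<partial>lborel \<partial>M) \<longlonglongrightarrow> 0"
    and d0: "(\<lambda>m. \<integral>\<^sup>+\<omega>. ennreal ((simple_int W (n m) (X m) (a m) (b m) (x m) (y m) \<omega> - I \<omega>)^2) \<partial>M)
            \<longlonglongrightarrow> 0"
    unfolding stoch_int_def by blast
  have "(\<integral>\<^sup>+\<omega>. ennreal ((I \<omega>)^2) \<partial>M) \<le> ennreal ((1 + \<eta>)^2) * ?B" if \<eta>: "0 < \<eta>" for \<eta>
  proof -
    define c1 where "c1 = ennreal (1 + \<eta>)"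
    define c2 where "c2 = ennreal (1 + 1/\<eta>)"
    define bound where "bound m = c1 * (c1 * ?B + c2 * iterated_nn_integral M (\<lambda>(s, z, \<omega>).
          ennreal ((simple_fun_st (n m) (X m) (a m) (b m) (x m) (y m) s z \<omega> - f s z \<omega>)^2)))
        + c2 * (\<integral>\<^sup>+\<omega>. ennreal ((simple_int W (n m) (X m) (a m) (b m) (x m) (y m) \<omega> - I \<omega>)^2) \<partial>M)" for m
    have lim: "bound \<longlonglongrightarrow> c1 * (c1 * ?B + c2 * 0) + c2 * 0"
      using e0 d0 unfolding bound_def c1_def c2_def iterated_nn_integral_def
      by (intro tendsto_add tendsto_const ennreal_tendsto_cmult) auto
    have "(\<integral>\<^sup>+\<omega>. ennreal ((I \<omega>)^2) \<partial>M) \<le> bound m" for m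
      using second_moment_le_simple_approx[OF W sp[of m] f Im \<eta>] unfolding bound_def c1_def c2_def .
    then have "(\<integral>\<^sup>+\<omega>. ennreal ((I \<omega>)^2) \<partial>M) \<le> c1 * (c1 * ?B + c2 * 0) + c2 * 0"
      by (intro LIMSEQ_le_const[OF lim]) auto
    then have "(\<integral>\<^sup>+\<omega>. ennreal ((I \<omega>)^2) \<partial>M) \<le> c1 * (c1 * ?B)" by simp
    then show ?thesis unfolding c1_def using \<eta>
      by (simp add: power2_eq_square ennreal_mult mult.assoc)
  qed
  then show ?thesis by (rule ennreal_le_of_le_mult_one_plus)
qed

section \<open>Gaussian integrals of the heat kernel\<close>

lemma heat_kernel_nonneg: "0 \<le> \<kappa> \<Longrightarrow> 0 \<le> t \<Longrightarrow> 0 \<le> heat_kernel \<kappa> t x"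
  unfolding heat_kernel_def by simp

lemma heat_kernel_mult_exp:
  assumes "0 < \<kappa>" "0 < r"
  shows "heat_kernel \<kappa> r w * exp (- c * w / 2)
       = exp (c^2 * \<kappa> * r / 8) * normal_density (- c * \<kappa> * r / 2) (sqrt (\<kappa> * r)) w"
proof -
  have "c^2 * \<kappa> * r / 8 + - ((w + c * \<kappa> * r / 2)^2) / (2 * (\<kappa> * r)) = - (w^2) / (2 * \<kappa> * r) + - c * w / 2"
    using assms by (simp add: field_simps power2_eq_square)
  then have "exp (c^2 * \<kappa> * r / 8) * exp (- ((w + c * \<kappa> * r / 2)^2) / (2 * (\<kappa> * r)))
      = exp (- (w^2) / (2 * \<kappa> * r)) * exp (- c * w / 2)"
    by (metis exp_add)
  then show ?thesis
    using assms unfolding heat_kernel_def normal_density_def by (simp add: mult.assoc)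
qed

lemma heat_kernel_sq_mult_exp:
  assumes "0 < \<kappa>" "0 < r"
  shows "(heat_kernel \<kappa> r w)^2 * exp (- c * w)
       = exp (c^2 * \<kappa> * r / 4) / (2 * sqrt (pi * \<kappa> * r)) * normal_density (- c * \<kappa> * r / 2) (sqrt (\<kappa> * r / 2)) w"
proof -
  have pkr: "0 < pi * \<kappa> * r" using assms by simp
  have "c^2 * \<kappa> * r / 4 + - ((w + c * \<kappa> * r / 2)^2 / (\<kappa> * r))
      = (- (w^2) / (2 * \<kappa> * r) + - (w^2) / (2 * \<kappa> * r)) + - c * w"
    using assms by (simp add: field_simps power2_eq_square)
  then have "exp (c^2 * \<kappa> * r / 4) * exp (- ((w + c * \<kappa> * r / 2)^2 / (\<kappa> * r)))
      = (exp (- (w^2) / (2 * \<kappa> * r)))^2 * exp (- c * w)"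
    by (metis exp_add power2_eq_square)
  moreover have "sqrt (2 * pi * \<kappa> * r) ^ 2 = 2 * (sqrt (pi * \<kappa> * r) * sqrt (pi * \<kappa> * r))"
    using pkr by simp
  ultimately show ?thesis
    using assms pkr unfolding heat_kernel_def normal_density_def
    by (simp add: power_divide real_sqrt_divide field_simps)
qed

lemma nn_integral_normal_density:
  "0 < \<sigma> \<Longrightarrow> (\<integral>\<^sup>+x. ennreal (normal_density \<mu> \<sigma> x) \<partial>lborel) = 1"
  using integral_normal_density[of \<sigma> \<mu>] by (subst nn_integral_eq_integral) auto

lemma nn_integral_lborel_shift:
  fixes f :: "real \<Rightarrow> ennreal" and x :: real
  shows "f \<in> borel_measurable borel \<Longrightarrow> (\<integral>\<^sup>+y. f y \<partial>lborel) = (\<integral>\<^sup>+w. f (x + w) \<partial>lborel)"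
  using nn_integral_real_affine[of f 1 x] by simp

lemma nn_integral_exp_div_sqrt:
  assumes "0 < \<mu>"
  shows "(\<integral>\<^sup>+r. ennreal (indicator {0<..} r * (exp (- \<mu> * r) / sqrt r)) \<partial>lborel) = ennreal (sqrt pi / sqrt \<mu>)"
proof -
  define g where "g t = indicator {0..} t * (t powr (1/2 - 1) / exp t)" for t :: real
  have "((\<lambda>t::real. t powr (1/2 - 1) / exp t) has_integral Gamma (1/2::real)) {0..}"
    by (rule Gamma_integral_real) simp
  then have G: "(\<integral>\<^sup>+t. ennreal (g t) \<partial>lborel) = ennreal (sqrt pi)"
    unfolding g_def Gamma_one_half_real[symmetric] by (intro nn_integral_has_integral_lebesgue) auto
  \<comment> \<open>substitute \<open>t = \<mu> r\<close> in the Gamma integral for \<open>\<Gamma>(1/2) = \<surd>\<pi>\<close>\<close>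
  have "g (0 + \<mu> * r) = (1 / sqrt \<mu>) * (indicator {0<..} r * (exp (- \<mu> * r) / sqrt r))" for r
  proof (cases "0 < r")
    case True
    have "(\<mu> * r) powr (1/2 - 1) = inverse (sqrt \<mu> * sqrt r)"
      using True assms powr_minus[of "\<mu> * r" "1/2"] by (simp add: powr_half_sqrt real_sqrt_mult)
    then show ?thesis using True assms unfolding g_def by (simp add: field_simps exp_minus)
  next
    case False
    then show ?thesis using assms unfolding g_def by (auto simp: indicator_def zero_le_mult_iff)
  qed
  moreover have "(\<lambda>t. ennreal (g t)) \<in> borel_measurable borel" unfolding g_def by measurable
  ultimately have "ennreal (sqrt pi) = ennreal \<mu> * (\<integral>\<^sup>+r. ennreal (1 / sqrt \<mu>)
      * ennreal (indicator {0<..} r * (exp (- \<mu> * r) / sqrt r)) \<partial>lborel)"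
    using nn_integral_real_affine[of "\<lambda>t. ennreal (g t)" \<mu> 0] assms G
    by (simp add: ennreal_mult[symmetric] indicator_def)
  also have "\<dots> = ennreal (sqrt \<mu>) * (\<integral>\<^sup>+r. ennreal (indicator {0<..} r * (exp (- \<mu> * r) / sqrt r)) \<partial>lborel)"
    (is "_ = _ * ?X")
    using assms by (simp add: nn_integral_cmult ennreal_mult[symmetric] mult.assoc[symmetric] real_div_sqrt)
  finally have "ennreal (1 / sqrt \<mu>) * ennreal (sqrt pi) = (ennreal (1 / sqrt \<mu>) * ennreal (sqrt \<mu>)) * ?X"
    by (simp add: mult.assoc)
  also have "ennreal (1 / sqrt \<mu>) * ennreal (sqrt \<mu>) = 1"
    using assms by (simp add: ennreal_mult[symmetric])
  finally show ?thesis using assms by (simp add: ennreal_mult[symmetric])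
qed

lemma nn_integral_heat_kernel_mult_exp:
  assumes "0 < \<kappa>" "0 < t"
  shows "(\<integral>\<^sup>+y. ennreal (heat_kernel \<kappa> t (y - x) * exp (- c * y / 2)) \<partial>lborel)
       = ennreal (exp (\<kappa> * c^2 * t / 8 - c * x / 2))"
proof -
  have "heat_kernel \<kappa> t (x + w - x) * exp (- c * (x + w) / 2)
      = exp (\<kappa> * c^2 * t / 8 - c * x / 2) * normal_density (- c * \<kappa> * t / 2) (sqrt (\<kappa> * t)) w" for w
  proof -
    have "exp (- c * (x + w) / 2) = exp (- c * x / 2) * exp (- c * w / 2)"
      by (simp add: exp_add[symmetric] field_simps)
    moreover have "exp (\<kappa> * c^2 * t / 8 - c * x / 2) = exp (- c * x / 2) * exp (c^2 * \<kappa> * t / 8)"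
      by (simp add: exp_add[symmetric] field_simps)
    ultimately have "heat_kernel \<kappa> t (x + w - x) * exp (- c * (x + w) / 2)
        = exp (- c * x / 2) * (heat_kernel \<kappa> t w * exp (- c * w / 2))"
      by (simp add: ac_simps)
    also have "\<dots> = exp (- c * x / 2) * exp (c^2 * \<kappa> * t / 8) * normal_density (- c * \<kappa> * t / 2) (sqrt (\<kappa> * t)) w"
      unfolding heat_kernel_mult_exp[OF assms] by simp
    finally show ?thesis using \<open>exp (\<kappa> * c^2 * t / 8 - c * x / 2) = _\<close> by simp
  qed
  moreover have "(\<lambda>y. ennreal (heat_kernel \<kappa> t (y - x) * exp (- c * y / 2))) \<in> borel_measurable borel"
    unfolding heat_kernel_def by measurable
  ultimately show ?thesis
    using nn_integral_normal_density[of "sqrt (\<kappa> * t)" "- c * \<kappa> * t / 2"] assms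
    by (subst nn_integral_lborel_shift[of _ x]) (simp_all add: ennreal_mult nn_integral_cmult)
qed

lemma nn_integral_heat_kernel_sq_mult_exp:
  assumes "0 < \<kappa>" "0 < r"
  shows "(\<integral>\<^sup>+z. ennreal ((heat_kernel \<kappa> r (z - x))^2 * exp (- c * z)) \<partial>lborel)
       = ennreal (exp (c^2 * \<kappa> * r / 4 - c * x) / (2 * sqrt (pi * \<kappa> * r)))"
proof -
  have "ennreal ((heat_kernel \<kappa> r (x + w - x))^2 * exp (- c * (x + w)))
      = ennreal (exp (c^2 * \<kappa> * r / 4 - c * x) / (2 * sqrt (pi * \<kappa> * r)))
        * ennreal (normal_density (- c * \<kappa> * r / 2) (sqrt (\<kappa> * r / 2)) w)" for w
  proof -
    have "exp (- c * (x + w)) = exp (- c * x) * exp (- c * w)"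
      by (simp add: exp_add[symmetric] field_simps)
    moreover have "exp (c^2 * \<kappa> * r / 4 - c * x) = exp (- c * x) * exp (c^2 * \<kappa> * r / 4)"
      by (simp add: exp_add[symmetric] field_simps)
    ultimately have "(heat_kernel \<kappa> r (x + w - x))^2 * exp (- c * (x + w))
        = exp (- c * x) * ((heat_kernel \<kappa> r w)^2 * exp (- c * w))"
      by (simp add: ac_simps)
    also have "\<dots> = exp (- c * x) * exp (c^2 * \<kappa> * r / 4) / (2 * sqrt (pi * \<kappa> * r))
        * normal_density (- c * \<kappa> * r / 2) (sqrt (\<kappa> * r / 2)) w"
      unfolding heat_kernel_sq_mult_exp[OF assms] by simp
    finally show ?thesis using \<open>exp (c^2 * \<kappa> * r / 4 - c * x) = _\<close> assms
      by (simp add: ennreal_mult[symmetric])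
  qed
  moreover have "(\<lambda>z. ennreal ((heat_kernel \<kappa> r (z - x))^2 * exp (- c * z))) \<in> borel_measurable borel"
    unfolding heat_kernel_def by measurable
  ultimately show ?thesis
    using nn_integral_normal_density[of "sqrt (\<kappa> * r / 2)" "- c * \<kappa> * r / 2"] assms
    by (subst nn_integral_lborel_shift[of _ x]) (simp_all add: nn_integral_cmult)
qed

lemma heat_sg_sq_le:
  assumes \<kappa>: "0 < \<kappa>" and t: "0 \<le> t" and K: "\<forall>y. \<bar>exp (c * y / 2) * u0 y\<bar> \<le> K"
  shows "(heat_sg \<kappa> t u0 x)^2 \<le> K^2 * exp (\<kappa> * c^2 * t / 4 - c * x)"
proof -
  have u0: "\<bar>u0 y\<bar> \<le> K * exp (- c * y / 2)" for y
    using K[rule_format, of y] by (simp add: abs_mult exp_minus field_simps)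
  have K0: "0 \<le> K" using K[rule_format, of 0] by linarith
  have "\<bar>heat_sg \<kappa> t u0 x\<bar> \<le> K * exp (\<kappa> * c^2 * t / 8 - c * x / 2)"
  proof (cases "t = 0")
    case True
    then show ?thesis using u0[of x] by (simp add: heat_sg_def)
  next
    case False
    then have tp: "0 < t" using t by simp
    have "ennreal \<bar>heat_sg \<kappa> t u0 x\<bar> \<le> (\<integral>\<^sup>+y. ennreal \<bar>heat_kernel \<kappa> t (y - x) * u0 y\<bar> \<partial>lborel)"
      using integral_norm_bound_ennreal[of lborel "\<lambda>y. heat_kernel \<kappa> t (y - x) * u0 y"] False
      by (cases "integrable lborel (\<lambda>y. heat_kernel \<kappa> t (y - x) * u0 y)")
        (simp_all add: heat_sg_def not_integrable_integral_eq)
    also have "\<dots> \<le> (\<integral>\<^sup>+y. ennreal K * ennreal (heat_kernel \<kappa> t (y - x) * exp (- c * y / 2)) \<partial>lborel)"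
    proof (intro nn_integral_mono)
      fix y
      have hk: "0 \<le> heat_kernel \<kappa> t (y - x)" using heat_kernel_nonneg \<kappa> t by simp
      then have "\<bar>heat_kernel \<kappa> t (y - x) * u0 y\<bar> \<le> heat_kernel \<kappa> t (y - x) * (K * exp (- c * y / 2))"
        using mult_left_mono[OF u0[of y] hk] hk by (simp add: abs_mult)
      moreover have "ennreal K * ennreal (heat_kernel \<kappa> t (y - x) * exp (- c * y / 2))
          = ennreal (heat_kernel \<kappa> t (y - x) * (K * exp (- c * y / 2)))"
        using K0 hk by (simp add: ennreal_mult[symmetric] ac_simps)
      ultimately show "ennreal \<bar>heat_kernel \<kappa> t (y - x) * u0 y\<bar>
          \<le> ennreal K * ennreal (heat_kernel \<kappa> t (y - x) * exp (- c * y / 2))"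
        by (simp add: ennreal_leI)
    qed
    also have "\<dots> = ennreal (K * exp (\<kappa> * c^2 * t / 8 - c * x / 2))"
    proof -
      have "(\<lambda>y. ennreal (heat_kernel \<kappa> t (y - x) * exp (- c * y / 2))) \<in> borel_measurable borel"
        unfolding heat_kernel_def by measurable
      then show ?thesis
        using nn_integral_heat_kernel_mult_exp[OF \<kappa> tp] K0 by (simp add: nn_integral_cmult ennreal_mult)
    qed
    finally show ?thesis using K0 by (simp add: ennreal_le_iff)
  qed
  then have "(heat_sg \<kappa> t u0 x)^2 \<le> (K * exp (\<kappa> * c^2 * t / 8 - c * x / 2))^2"
    by (metis abs_ge_zero power2_abs power_mono)
  also have "\<dots> = K^2 * exp (\<kappa> * c^2 * t / 4 - c * x)"
    using exp_of_nat_mult[of 2 "\<kappa> * c^2 * t / 8 - c * x / 2"] by (simp add: power_mult_distrib algebra_simps)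
  finally show ?thesis .
qed

definition heat_sq_conv :: "real \<Rightarrow> (real \<Rightarrow> real \<Rightarrow> ennreal) \<Rightarrow> real \<Rightarrow> real \<Rightarrow> ennreal" where
  "heat_sq_conv \<kappa> v t x = (\<integral>\<^sup>+s. \<integral>\<^sup>+z. ennreal (indicator {0..<t} s * (heat_kernel \<kappa> (t - s) (z - x))^2) * v s z \<partial>lborel \<partial>lborel)"

lemma heat_sq_conv_mono:
  "(\<And>s z. 0 \<le> s \<Longrightarrow> s < t \<Longrightarrow> v s z \<le> w s z) \<Longrightarrow> heat_sq_conv \<kappa> v t x \<le> heat_sq_conv \<kappa> w t x"
  unfolding heat_sq_conv_def by (intro nn_integral_mono) (auto simp: indicator_def intro: mult_left_mono)

lemma nn_integral_heat_time_le:
  assumes \<kappa>: "0 < \<kappa>" and \<mu>: "0 < \<mu>" and E: "0 \<le> E"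
  shows "(\<integral>\<^sup>+s. ennreal (indicator {0..<t} s * (E * (exp (- \<mu> * (t - s)) / (2 * sqrt (pi * \<kappa> * (t - s)))))) \<partial>lborel)
    \<le> ennreal (E / sqrt (4 * \<kappa> * \<mu>))"
proof -
  define Q where "Q s = indicator {0..<t} s * (E * (exp (- \<mu> * (t - s)) / (2 * sqrt (pi * \<kappa> * (t - s)))))" for s
  have "(\<integral>\<^sup>+s. ennreal (Q s) \<partial>lborel) = (\<integral>\<^sup>+r. ennreal (Q (t + (-1) * r)) \<partial>lborel)"
    using nn_integral_real_affine[of "\<lambda>s. ennreal (Q s)" "-1" t] unfolding Q_def by simp
  also have "\<dots> \<le> (\<integral>\<^sup>+r. ennreal (E / (2 * sqrt (pi * \<kappa>))) * ennreal (indicator {0<..} r * (exp (- \<mu> * r) / sqrt r)) \<partial>lborel)"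
  proof (intro nn_integral_mono)
    fix r :: real
    show "ennreal (Q (t + (-1) * r)) \<le> ennreal (E / (2 * sqrt (pi * \<kappa>))) * ennreal (indicator {0<..} r * (exp (- \<mu> * r) / sqrt r))"
    proof (cases "0 < r \<and> r \<le> t")
      case True
      then have "Q (t + (-1) * r) = E / (2 * sqrt (pi * \<kappa>)) * (indicator {0<..} r * (exp (- \<mu> * r) / sqrt r))"
        using \<kappa> unfolding Q_def by (simp add: real_sqrt_mult field_simps)
      then show ?thesis using True \<kappa> E by (simp add: ennreal_mult[symmetric])
    qed (auto simp: Q_def)
  qed
  also have "\<dots> = ennreal (E / (2 * sqrt (pi * \<kappa>))) * ennreal (sqrt pi / sqrt \<mu>)"
    using nn_integral_exp_div_sqrt[OF \<mu>] by (simp add: nn_integral_cmult)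
  also have "\<dots> = ennreal (E / sqrt (4 * \<kappa> * \<mu>))"
  proof -
    have "sqrt (4 * \<kappa> * \<mu>) = 2 * sqrt \<kappa> * sqrt \<mu>" "sqrt (pi * \<kappa>) = sqrt pi * sqrt \<kappa>"
      by (simp_all add: real_sqrt_mult)
    then show ?thesis using \<kappa> \<mu> E by (simp add: ennreal_mult[symmetric] field_simps)
  qed
  finally show ?thesis unfolding Q_def .
qed

lemma heat_sq_conv_exp_le:
  assumes \<kappa>: "0 < \<kappa>" and \<mu>: "0 < \<beta> - \<kappa> * c^2 / 4" and t: "0 \<le> t"
  shows "heat_sq_conv \<kappa> (\<lambda>s z. ennreal (exp (\<beta> * s - c * z))) t x
     \<le> ennreal (exp (\<beta> * t - c * x) / sqrt (4 * \<kappa> * (\<beta> - \<kappa> * c^2 / 4)))"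
proof -
  define \<mu> where "\<mu> = \<beta> - \<kappa> * c^2 / 4"
  define E where "E = exp (\<beta> * t - c * x)"
  define Q where "Q s = indicator {0..<t} s * (E * (exp (- \<mu> * (t - s)) / (2 * sqrt (pi * \<kappa> * (t - s)))))" for s
  have inner: "(\<integral>\<^sup>+z. ennreal (indicator {0..<t} s * (heat_kernel \<kappa> (t - s) (z - x))^2)
      * ennreal (exp (\<beta> * s - c * z)) \<partial>lborel) = ennreal (Q s)" for s
  proof (cases "s \<in> {0..<t}")
    case True
    then have r: "0 < t - s" by auto
    have "(\<integral>\<^sup>+z. ennreal (indicator {0..<t} s * (heat_kernel \<kappa> (t - s) (z - x))^2)
        * ennreal (exp (\<beta> * s - c * z)) \<partial>lborel)
      = (\<integral>\<^sup>+z. ennreal (exp (\<beta> * s)) * ennreal ((heat_kernel \<kappa> (t - s) (z - x))^2 * exp (- c * z)) \<partial>lborel)"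
      using True by (intro nn_integral_cong) (simp add: ennreal_mult[symmetric] exp_diff exp_minus field_simps)
    also have "\<dots> = ennreal (exp (\<beta> * s) * (exp (c^2 * \<kappa> * (t - s) / 4 - c * x) / (2 * sqrt (pi * \<kappa> * (t - s)))))"
      using nn_integral_heat_kernel_sq_mult_exp[OF \<kappa> r, of x c] \<kappa> r
      by (subst nn_integral_cmult) (auto simp: ennreal_mult[symmetric] heat_kernel_def)
    also have "\<dots> = ennreal (Q s)"
    proof -
      have "\<beta> * s + (c^2 * \<kappa> * (t - s) / 4 - c * x) = (\<beta> * t - c * x) + (- \<mu> * (t - s))"
        unfolding \<mu>_def by (simp add: algebra_simps)
      then have "exp (\<beta> * s) * exp (c^2 * \<kappa> * (t - s) / 4 - c * x) = E * exp (- \<mu> * (t - s))"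
        unfolding E_def by (metis exp_add)
      then show ?thesis using True unfolding Q_def by (simp add: field_simps)
    qed
    finally show ?thesis .
  qed (simp add: Q_def)
  have "0 < \<mu>" using \<mu> unfolding \<mu>_def .
  then show ?thesis
    using nn_integral_heat_time_le[OF \<kappa>, where \<mu> = \<mu> and E = E and t = t]
    unfolding heat_sq_conv_def inner Q_def E_def \<mu>_def by simp
qed

section \<open>The second-moment renewal inequality\<close>

lemma lipschitz_constant_nonneg:
  fixes \<sigma> :: "real \<Rightarrow> real"
  assumes "\<forall>x y. \<bar>\<sigma> x - \<sigma> y\<bar> \<le> L * \<bar>x - y\<bar>"
  shows "0 \<le> L"
proof -
  have "\<bar>\<sigma> 1 - \<sigma> 0\<bar> \<le> L" using assms[rule_format, of 1 0] by simp
  then show ?thesis by (meson abs_ge_zero order_trans)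
qed

lemma lipschitz_borel_measurable:
  fixes \<sigma> :: "real \<Rightarrow> real"
  assumes "\<forall>x y. \<bar>\<sigma> x - \<sigma> y\<bar> \<le> L * \<bar>x - y\<bar>"
  shows "\<sigma> \<in> borel_measurable borel"
proof -
  have "L-lipschitz_on UNIV \<sigma>"
    using assms lipschitz_constant_nonneg[OF assms] by (intro lipschitz_onI) (auto simp: dist_real_def)
  then show ?thesis by (intro borel_measurable_continuous_onI lipschitz_on_continuous_on)
qed

lemma power2_le_of_lipschitz:
  fixes \<sigma> :: "real \<Rightarrow> real"
  assumes "\<forall>x y. \<bar>\<sigma> x - \<sigma> y\<bar> \<le> L * \<bar>x - y\<bar>" and "\<sigma> 0 = 0"
  shows "(\<sigma> v)^2 \<le> L^2 * v^2"
proof -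
  have "\<bar>\<sigma> v\<bar> \<le> L * \<bar>v\<bar>" using assms(1)[rule_format, of v 0] assms(2) by simp
  then have "\<bar>\<sigma> v\<bar>^2 \<le> (L * \<bar>v\<bar>)^2" by (intro power_mono) auto
  then show ?thesis by (simp add: power_mult_distrib)
qed

lemma predictable_subset_product:
  assumes W: "brownian_sheet M F W"
  shows "sets (predictable M F) \<subseteq> sets (lborel \<Otimes>\<^sub>M lborel \<Otimes>\<^sub>M M)"
    and "space (predictable M F) = space (lborel \<Otimes>\<^sub>M lborel \<Otimes>\<^sub>M M)"
proof -
  define \<Omega> where "\<Omega> = (UNIV :: real set) \<times> (UNIV :: real set) \<times> space M"
  define G where "G = {{(s, y::real, \<omega>). a < s \<and> s \<le> b \<and> y \<in> B \<and> \<omega> \<in> G'} | a b B G'. 0 \<le> a \<and> B \<in> sets borel \<and> G' \<in> F a}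
      \<union> {{(s, y::real, \<omega>). s = 0 \<and> y \<in> B \<and> \<omega> \<in> G'} | B G'. B \<in> sets borel \<and> G' \<in> F 0}"
  have P: "predictable M F = sigma \<Omega> G" unfolding predictable_def \<Omega>_def G_def ..
  have FM: "F t \<subseteq> sets M" for t using brownian_sheet_filtration(2)[OF W] .
  have G_sets: "G \<subseteq> sets (lborel \<Otimes>\<^sub>M lborel \<Otimes>\<^sub>M M)"
  proof
    fix A assume "A \<in> G"
    then consider (interval) a b B G' where "A = {(s, y, \<omega>). a < s \<and> s \<le> b \<and> y \<in> B \<and> \<omega> \<in> G'}"
        "B \<in> sets borel" "G' \<in> F a"
      | (zero) B G' where "A = {(s, y, \<omega>). s = 0 \<and> y \<in> B \<and> \<omega> \<in> G'}" "B \<in> sets borel" "G' \<in> F 0"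
      unfolding G_def by blast
    then show "A \<in> sets (lborel \<Otimes>\<^sub>M lborel \<Otimes>\<^sub>M M)"
    proof cases
      case interval
      then have "A = {a<..b} \<times> (B \<times> G')" by auto
      moreover have "G' \<in> sets M" using interval FM by auto
      ultimately show ?thesis using interval by auto
    next
      case zero
      then have "A = {0} \<times> (B \<times> G')" by auto
      moreover have "G' \<in> sets M" using zero FM by auto
      ultimately show ?thesis using zero by auto
    qed
  qed
  have space: "space (lborel \<Otimes>\<^sub>M lborel \<Otimes>\<^sub>M M) = \<Omega>" unfolding \<Omega>_def by (simp add: space_pair_measure)
  then have "G \<subseteq> Pow \<Omega>" using G_sets sets.sets_into_space by blast
  then have "space (predictable M F) = \<Omega>" "sets (predictable M F) = sigma_sets \<Omega> G"
    unfolding P by simp_all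
  then show "sets (predictable M F) \<subseteq> sets (lborel \<Otimes>\<^sub>M lborel \<Otimes>\<^sub>M M)"
    and "space (predictable M F) = space (lborel \<Otimes>\<^sub>M lborel \<Otimes>\<^sub>M M)"
    using sets.sigma_sets_subset[OF G_sets] space by simp_all
qed

lemma predictable_measurable_product:
  assumes "brownian_sheet M F W" and "g \<in> borel_measurable (predictable M F)"
  shows "g \<in> borel_measurable (lborel \<Otimes>\<^sub>M lborel \<Otimes>\<^sub>M M)"
  using assms(2) predictable_subset_product[OF assms(1)] unfolding measurable_def by auto

lemma iterated_nn_integral_swap:
  fixes H :: "real \<times> real \<times> 'a \<Rightarrow> ennreal"
  assumes [measurable]: "H \<in> borel_measurable (lborel \<Otimes>\<^sub>M lborel \<Otimes>\<^sub>M M)" and "sigma_finite_measure M"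
  shows "iterated_nn_integral M H = (\<integral>\<^sup>+s. \<integral>\<^sup>+z. \<integral>\<^sup>+\<omega>. H (s, z, \<omega>) \<partial>M \<partial>lborel \<partial>lborel)"
proof -
  interpret M: sigma_finite_measure M by (rule assms(2))
  interpret pair_sigma_finite lborel M by unfold_locales
  have "(\<lambda>(p, z). H (fst p, z, snd p)) \<in> borel_measurable ((lborel \<Otimes>\<^sub>M M) \<Otimes>\<^sub>M lborel)" by measurable
  then have "(\<lambda>p. \<integral>\<^sup>+z. H (fst p, z, snd p) \<partial>lborel) \<in> borel_measurable (lborel \<Otimes>\<^sub>M M)"
    by (rule lborel.borel_measurable_nn_integral)
  then have "iterated_nn_integral M H = (\<integral>\<^sup>+s. \<integral>\<^sup>+\<omega>. \<integral>\<^sup>+z. H (s, z, \<omega>) \<partial>lborel \<partial>M \<partial>lborel)"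
    unfolding iterated_nn_integral_def using Fubini[of "\<lambda>(s, \<omega>). \<integral>\<^sup>+z. H (s, z, \<omega>) \<partial>lborel"]
    by (simp add: case_prod_beta')
  also have "\<dots> = (\<integral>\<^sup>+s. \<integral>\<^sup>+z. \<integral>\<^sup>+\<omega>. H (s, z, \<omega>) \<partial>M \<partial>lborel \<partial>lborel)"
  proof (rule nn_integral_cong)
    fix s :: real
    have "(\<lambda>(z, \<omega>). H (s, z, \<omega>)) \<in> borel_measurable (lborel \<Otimes>\<^sub>M M)" by measurable
    from Fubini[OF this]
    show "(\<integral>\<^sup>+\<omega>. \<integral>\<^sup>+z. H (s, z, \<omega>) \<partial>lborel \<partial>M) = (\<integral>\<^sup>+z. \<integral>\<^sup>+\<omega>. H (s, z, \<omega>) \<partial>M \<partial>lborel)" by simp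
  qed
  finally show ?thesis .
qed

lemma heat_sq_conv_add_cmult:
  assumes "(\<lambda>(s, z). v s z) \<in> borel_measurable (lborel \<Otimes>\<^sub>M lborel)"
    and "(\<lambda>(s, z). w s z) \<in> borel_measurable (lborel \<Otimes>\<^sub>M lborel)"
  shows "heat_sq_conv \<kappa> (\<lambda>s z. A * v s z + B * w s z) t x = A * heat_sq_conv \<kappa> v t x + B * heat_sq_conv \<kappa> w t x"
proof -
  define h where "h s z = ennreal (indicator {0..<t} s * (heat_kernel \<kappa> (t - s) (z - x))^2)" for s z
  have [measurable]: "(\<lambda>p. v (fst p) (snd p)) \<in> borel_measurable (lborel \<Otimes>\<^sub>M lborel)"
      "(\<lambda>p. w (fst p) (snd p)) \<in> borel_measurable (lborel \<Otimes>\<^sub>M lborel)"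
    using assms by (simp_all add: case_prod_beta')
  have hv: "(\<lambda>(s, z). h s z * v s z) \<in> borel_measurable (lborel \<Otimes>\<^sub>M lborel)"
    and hw: "(\<lambda>(s, z). h s z * w s z) \<in> borel_measurable (lborel \<Otimes>\<^sub>M lborel)"
    unfolding h_def heat_kernel_def case_prod_beta' by measurable
  have "heat_sq_conv \<kappa> (\<lambda>s z. A * v s z + B * w s z) t x
      = (\<integral>\<^sup>+s. A * (\<integral>\<^sup>+z. h s z * v s z \<partial>lborel) + B * (\<integral>\<^sup>+z. h s z * w s z \<partial>lborel) \<partial>lborel)"
    unfolding heat_sq_conv_def h_def[symmetric] using measurable_Pair2[OF hv] measurable_Pair2[OF hw]
    by (intro nn_integral_cong) (simp add: distrib_left ac_simps nn_integral_add nn_integral_cmult)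
  also have "\<dots> = A * heat_sq_conv \<kappa> v t x + B * heat_sq_conv \<kappa> w t x"
    unfolding heat_sq_conv_def h_def[symmetric]
    using lborel.borel_measurable_nn_integral[OF hv] lborel.borel_measurable_nn_integral[OF hw]
    by (simp add: nn_integral_add nn_integral_cmult)
  finally show ?thesis .
qed

lemma iterated_nn_integral_heat_kernel_sq:
  fixes g :: "real \<Rightarrow> real \<Rightarrow> 'a \<Rightarrow> ennreal"
  assumes g: "(\<lambda>(s, z, \<omega>). g s z \<omega>) \<in> borel_measurable (lborel \<Otimes>\<^sub>M lborel \<Otimes>\<^sub>M M)"
    and M: "sigma_finite_measure M"
  shows "iterated_nn_integral M (\<lambda>(s, z, \<omega>). ennreal (indicator {0..<t} s * (heat_kernel \<kappa> (t - s) (z - x))^2) * g s z \<omega>)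
       = heat_sq_conv \<kappa> (\<lambda>s z. \<integral>\<^sup>+\<omega>. g s z \<omega> \<partial>M) t x"
proof -
  have g'[measurable]: "(\<lambda>p. g (fst p) (fst (snd p)) (snd (snd p))) \<in> borel_measurable (lborel \<Otimes>\<^sub>M lborel \<Otimes>\<^sub>M M)"
    using g by (simp add: case_prod_beta')
  have "(\<lambda>(s, z, \<omega>). ennreal (indicator {0..<t} s * (heat_kernel \<kappa> (t - s) (z - x))^2) * g s z \<omega>)
      \<in> borel_measurable (lborel \<Otimes>\<^sub>M lborel \<Otimes>\<^sub>M M)"
    unfolding heat_kernel_def case_prod_beta' by measurable
  then have "iterated_nn_integral M (\<lambda>(s, z, \<omega>). ennreal (indicator {0..<t} s * (heat_kernel \<kappa> (t - s) (z - x))^2) * g s z \<omega>)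
      = (\<integral>\<^sup>+s. \<integral>\<^sup>+z. \<integral>\<^sup>+\<omega>. ennreal (indicator {0..<t} s * (heat_kernel \<kappa> (t - s) (z - x))^2) * g s z \<omega> \<partial>M \<partial>lborel \<partial>lborel)"
    using iterated_nn_integral_swap[OF _ M] by simp
  also have "\<dots> = heat_sq_conv \<kappa> (\<lambda>s z. \<integral>\<^sup>+\<omega>. g s z \<omega> \<partial>M) t x"
  proof -
    have "(\<lambda>\<omega>. (s, z, \<omega>)) \<in> M \<rightarrow>\<^sub>M lborel \<Otimes>\<^sub>M lborel \<Otimes>\<^sub>M M" for s z :: real by measurable
    from measurable_compose[OF this g'] have "(\<lambda>\<omega>. g s z \<omega>) \<in> borel_measurable M" for s z by simp
    then show ?thesis unfolding heat_sq_conv_def by (simp add: nn_integral_cmult)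
  qed
  finally show ?thesis .
qed

lemma mild_solution_measurable:
  assumes W: "brownian_sheet M F W" and u: "mild_solution M F W \<kappa> \<sigma> u0 u"
  shows "(\<lambda>(s, z, \<omega>). if 0 \<le> s then u s z \<omega> else 0) \<in> borel_measurable (lborel \<Otimes>\<^sub>M lborel \<Otimes>\<^sub>M M)"
  using u predictable_measurable_product[OF W] unfolding mild_solution_def by blast

lemma mild_solution_noise_integrand_measurable:
  assumes W: "brownian_sheet M F W" and u: "mild_solution M F W \<kappa> \<sigma> u0 u"
    and lip: "\<forall>x y. \<bar>\<sigma> x - \<sigma> y\<bar> \<le> L * \<bar>x - y\<bar>"
  shows "(\<lambda>(s, y, \<omega>). indicator {0..<t} s * heat_kernel \<kappa> (t - s) (y - x) * \<sigma> (u s y \<omega>))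
      \<in> borel_measurable (lborel \<Otimes>\<^sub>M lborel \<Otimes>\<^sub>M M)"
proof -
  define ut where "ut = (\<lambda>(s, z, \<omega>). if 0 \<le> s then u s z \<omega> else 0)"
  have [measurable]: "ut \<in> borel_measurable (lborel \<Otimes>\<^sub>M lborel \<Otimes>\<^sub>M M)"
    unfolding ut_def by (rule mild_solution_measurable[OF W u])
  have [measurable]: "\<sigma> \<in> borel_measurable borel" by (rule lipschitz_borel_measurable[OF lip])
  have "(\<lambda>(s, y, \<omega>). indicator {0..<t} s * heat_kernel \<kappa> (t - s) (y - x) * \<sigma> (ut (s, y, \<omega>)))
      \<in> borel_measurable (lborel \<Otimes>\<^sub>M lborel \<Otimes>\<^sub>M M)"
    unfolding heat_kernel_def by measurable
  moreover have "indicator {0..<t} s * heat_kernel \<kappa> (t - s) (y - x) * \<sigma> (ut (s, y, \<omega>))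
      = indicator {0..<t} s * heat_kernel \<kappa> (t - s) (y - x) * \<sigma> (u s y \<omega>)" for s y \<omega>
    unfolding ut_def by (auto simp: indicator_def)
  ultimately show ?thesis by simp
qed

lemma mild_solution_noise_le:
  assumes W: "brownian_sheet M F W" and u: "mild_solution M F W \<kappa> \<sigma> u0 u"
    and lip: "\<forall>x y. \<bar>\<sigma> x - \<sigma> y\<bar> \<le> L * \<bar>x - y\<bar>" and \<sigma>0: "\<sigma> 0 = 0"
    and I: "stoch_int M F W (\<lambda>s y \<omega>. indicator {0..<t} s * heat_kernel \<kappa> (t - s) (y - x) * \<sigma> (u s y \<omega>)) I"
  shows "(\<integral>\<^sup>+\<omega>. ennreal ((I \<omega>)^2) \<partial>M)
    \<le> ennreal (L^2) * heat_sq_conv \<kappa> (\<lambda>s z. \<integral>\<^sup>+\<omega>. ennreal ((u s z \<omega>)^2) \<partial>M) t x"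
proof -
  interpret prob_space M using W by (rule brownian_sheet_prob_space)
  define ut where "ut = (\<lambda>(s, z, \<omega>). if 0 \<le> s then u s z \<omega> else 0)"
  have [measurable]: "ut \<in> borel_measurable (lborel \<Otimes>\<^sub>M lborel \<Otimes>\<^sub>M M)"
    unfolding ut_def by (rule mild_solution_measurable[OF W u])
  define h where "h s z = indicator {0..<t} s * (heat_kernel \<kappa> (t - s) (z - x))^2" for s z
  \<comment> \<open>the integrand only sees \<open>u\<close> at times \<open>s \<ge> 0\<close>, where it agrees with the measurable \<open>ut\<close>\<close>
  have f_eq: "indicator {0..<t} s * heat_kernel \<kappa> (t - s) (y - x) * \<sigma> (u s y \<omega>)
      = indicator {0..<t} s * heat_kernel \<kappa> (t - s) (y - x) * \<sigma> (ut (s, y, \<omega>))" for s y \<omega>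
    unfolding ut_def by (auto simp: indicator_def)
  note mild_solution_noise_integrand_measurable[OF W u lip, of t x]
  then have "(\<integral>\<^sup>+\<omega>. ennreal ((I \<omega>)^2) \<partial>M) \<le> iterated_nn_integral M
      (\<lambda>(s, z, \<omega>). ennreal ((indicator {0..<t} s * heat_kernel \<kappa> (t - s) (z - x) * \<sigma> (u s z \<omega>))^2))"
    using stoch_int_second_moment_le[OF W _ I] by blast
  also have "\<dots> \<le> iterated_nn_integral M (\<lambda>(s, z, \<omega>). ennreal (L^2) * (ennreal (h s z) * ennreal ((ut (s, z, \<omega>))^2)))"
  proof (intro iterated_nn_integral_mono, clarify)
    fix s z \<omega>
    have "(indicator {0..<t} s * heat_kernel \<kappa> (t - s) (z - x) * \<sigma> (ut (s, z, \<omega>)))^2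
        = h s z * (\<sigma> (ut (s, z, \<omega>)))^2"
      unfolding h_def by (simp add: power_mult_distrib indicator_def)
    also have "\<dots> \<le> h s z * (L^2 * (ut (s, z, \<omega>))^2)"
      unfolding h_def by (intro mult_left_mono power2_le_of_lipschitz[OF lip \<sigma>0]) auto
    finally show "ennreal ((indicator {0..<t} s * heat_kernel \<kappa> (t - s) (z - x) * \<sigma> (u s z \<omega>))^2)
        \<le> ennreal (L^2) * (ennreal (h s z) * ennreal ((ut (s, z, \<omega>))^2))"
      unfolding f_eq h_def by (simp add: ennreal_mult[symmetric] ennreal_leI ac_simps)
  qed
  also have "\<dots> = ennreal (L^2) * heat_sq_conv \<kappa> (\<lambda>s z. \<integral>\<^sup>+\<omega>. ennreal ((ut (s, z, \<omega>))^2) \<partial>M) t x"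
  proof -
    have "(\<lambda>(s, z, \<omega>). ennreal (h s z) * ennreal ((ut (s, z, \<omega>))^2)) \<in> borel_measurable (lborel \<Otimes>\<^sub>M lborel \<Otimes>\<^sub>M M)"
      unfolding h_def heat_kernel_def by measurable
    moreover have "iterated_nn_integral M (\<lambda>(s, z, \<omega>). ennreal (h s z) * ennreal ((ut (s, z, \<omega>))^2))
        = heat_sq_conv \<kappa> (\<lambda>s z. \<integral>\<^sup>+\<omega>. ennreal ((ut (s, z, \<omega>))^2) \<partial>M) t x"
      unfolding h_def
      by (rule iterated_nn_integral_heat_kernel_sq[where g = "\<lambda>s z \<omega>. ennreal ((ut (s, z, \<omega>))^2)",
            OF _ prob_space_imp_sigma_finite[OF prob_space_axioms]]) measurable
    ultimately show ?thesis
      using iterated_nn_integral_cmult[of _ M "ennreal (L^2)"] by (simp add: case_prod_beta')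
  qed
  also have "\<dots> \<le> ennreal (L^2) * heat_sq_conv \<kappa> (\<lambda>s z. \<integral>\<^sup>+\<omega>. ennreal ((u s z \<omega>)^2) \<partial>M) t x"
    by (intro mult_left_mono heat_sq_conv_mono) (auto simp: ut_def)
  finally show ?thesis .
qed

lemma mild_solution_second_moment_le:
  assumes \<kappa>: "0 < \<kappa>" and lip: "\<forall>x y. \<bar>\<sigma> x - \<sigma> y\<bar> \<le> L * \<bar>x - y\<bar>" and \<sigma>0: "\<sigma> 0 = 0"
    and W: "brownian_sheet M F W" and u: "mild_solution M F W \<kappa> \<sigma> u0 u"
    and K: "\<forall>y. \<bar>exp (c * y / 2) * u0 y\<bar> \<le> K" and \<beta>: "\<kappa> * c^2 / 4 \<le> \<beta>"
    and \<delta>: "0 < \<delta>" and t: "0 \<le> t"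
  shows "(\<integral>\<^sup>+\<omega>. ennreal ((u t x \<omega>)^2) \<partial>M) \<le> ennreal ((1 + \<delta>) * K^2 * exp (\<beta> * t - c * x))
     + ennreal ((1 + 1/\<delta>) * L^2) * heat_sq_conv \<kappa> (\<lambda>s z. \<integral>\<^sup>+\<omega>. ennreal ((u s z \<omega>)^2) \<partial>M) t x"
proof -
  interpret prob_space M using W by (rule brownian_sheet_prob_space)
  obtain I where I: "stoch_int M F W (\<lambda>s y \<omega>. indicator {0..<t} s * heat_kernel \<kappa> (t - s) (y - x) * \<sigma> (u s y \<omega>)) I"
    and AE: "AE \<omega> in M. u t x \<omega> = heat_sg \<kappa> t u0 x + I \<omega>"
    using u t unfolding mild_solution_def by blast
  define P where "P = heat_sg \<kappa> t u0 x"
  have "P^2 \<le> K^2 * exp (\<kappa> * c^2 * t / 4 - c * x)" unfolding P_def by (rule heat_sg_sq_le[OF \<kappa> t K])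
  also have "\<dots> \<le> K^2 * exp (\<beta> * t - c * x)"
    using mult_right_mono[OF \<beta> t] by (intro mult_left_mono) auto
  finally have "(1 + \<delta>) * P^2 \<le> (1 + \<delta>) * K^2 * exp (\<beta> * t - c * x)"
    using \<delta> by (simp add: mult.assoc)
  then have P: "ennreal (1 + \<delta>) * ennreal (P^2) \<le> ennreal ((1 + \<delta>) * K^2 * exp (\<beta> * t - c * x))"
    using \<delta> by (subst ennreal_mult[symmetric]) (auto intro: ennreal_leI)
  have "I \<in> borel_measurable M" using I unfolding stoch_int_def by blast
  moreover have "(\<integral>\<^sup>+\<omega>. ennreal ((u t x \<omega>)^2) \<partial>M) = (\<integral>\<^sup>+\<omega>. ennreal ((P + I \<omega>)^2) \<partial>M)"
    using AE unfolding P_def by (intro nn_integral_cong_AE) auto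
  ultimately have "(\<integral>\<^sup>+\<omega>. ennreal ((u t x \<omega>)^2) \<partial>M)
      \<le> ennreal (1 + \<delta>) * ennreal (P^2) + ennreal (1 + 1/\<delta>) * (\<integral>\<^sup>+\<omega>. ennreal ((I \<omega>)^2) \<partial>M)"
    using nn_integral_power2_add_le[of "\<lambda>_. P" M I \<delta>] \<delta> by (simp add: emeasure_space_1)
  also have "\<dots> \<le> ennreal ((1 + \<delta>) * K^2 * exp (\<beta> * t - c * x))
      + ennreal (1 + 1/\<delta>) * (ennreal (L^2) * heat_sq_conv \<kappa> (\<lambda>s z. \<integral>\<^sup>+\<omega>. ennreal ((u s z \<omega>)^2) \<partial>M) t x)"
    using P mild_solution_noise_le[OF W u lip \<sigma>0 I] by (intro add_mono mult_left_mono) auto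
  finally show ?thesis using \<delta> by (simp add: ennreal_mult mult.assoc)
qed

lemma heat_sq_conv_exp_sum_le:
  assumes \<kappa>: "0 < \<kappa>" and \<mu>: "0 < \<beta> - \<kappa> * c^2 / 4" and \<gamma>: "0 < \<gamma>" and t: "0 \<le> t"
    and A: "0 \<le> A" and B: "0 \<le> B"
  shows "heat_sq_conv \<kappa> (\<lambda>s z. ennreal (A * exp (\<beta> * s - c * z)) + ennreal (B * exp (\<gamma> * s))) t x
     \<le> ennreal (A * (exp (\<beta> * t - c * x) / sqrt (4 * \<kappa> * (\<beta> - \<kappa> * c^2 / 4))))
       + ennreal (B * (exp (\<gamma> * t) / sqrt (4 * \<kappa> * \<gamma>)))"
proof -
  define e1 where "e1 = exp (\<beta> * t - c * x) / sqrt (4 * \<kappa> * (\<beta> - \<kappa> * c^2 / 4))"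
  define e2 where "e2 = exp (\<gamma> * t) / sqrt (4 * \<kappa> * \<gamma>)"
  have "heat_sq_conv \<kappa> (\<lambda>s z. ennreal (A * exp (\<beta> * s - c * z)) + ennreal (B * exp (\<gamma> * s))) t x
      = heat_sq_conv \<kappa> (\<lambda>s z. ennreal A * ennreal (exp (\<beta> * s - c * z)) + ennreal B * ennreal (exp (\<gamma> * s - 0 * z))) t x"
    using A B by (simp add: ennreal_mult)
  also have "\<dots> = ennreal A * heat_sq_conv \<kappa> (\<lambda>s z. ennreal (exp (\<beta> * s - c * z))) t x
      + ennreal B * heat_sq_conv \<kappa> (\<lambda>s z. ennreal (exp (\<gamma> * s - 0 * z))) t x"
    by (rule heat_sq_conv_add_cmult) (simp_all add: case_prod_beta')
  also have "\<dots> \<le> ennreal A * ennreal e1 + ennreal B * ennreal e2"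
    using heat_sq_conv_exp_le[OF \<kappa> \<mu> t, of x] heat_sq_conv_exp_le[OF \<kappa> _ t, of \<gamma> 0 x] \<gamma>
    unfolding e1_def e2_def by (intro add_mono mult_left_mono) auto
  also have "\<dots> = ennreal (A * e1) + ennreal (B * e2)"
  proof -
    have "0 \<le> e1" "0 \<le> e2" unfolding e1_def e2_def using \<kappa> \<mu> \<gamma> by simp_all
    then show ?thesis using A B by (simp add: ennreal_mult)
  qed
  finally show ?thesis unfolding e1_def e2_def .
qed

lemma heat_sq_conv_iteration:
  fixes v :: "real \<Rightarrow> real \<Rightarrow> ennreal" and lam \<kappa> \<beta> c \<gamma> :: real
  defines "\<rho> \<equiv> lam / sqrt (4 * \<kappa> * (\<beta> - \<kappa> * c^2 / 4))" and "\<theta> \<equiv> lam / sqrt (4 * \<kappa> * \<gamma>)"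
  assumes \<kappa>: "0 < \<kappa>" and \<mu>: "0 < \<beta> - \<kappa> * c^2 / 4" and \<gamma>: "0 < \<gamma>"
    and a: "0 \<le> a" and lam: "0 \<le> lam" and C: "0 \<le> C"
    and ineq: "\<And>t x. 0 \<le> t \<Longrightarrow> v t x \<le> ennreal (a * exp (\<beta> * t - c * x)) + ennreal lam * heat_sq_conv \<kappa> v t x"
    and bound: "\<And>t x. 0 \<le> t \<Longrightarrow> t \<le> T \<Longrightarrow> v t x \<le> ennreal C"
  shows "0 \<le> t \<Longrightarrow> t \<le> T \<Longrightarrow>
    v t x \<le> ennreal (a * (\<Sum>i<n. \<rho>^i) * exp (\<beta> * t - c * x)) + ennreal (C * \<theta>^n * exp (\<gamma> * t))"
proof (induction n arbitrary: t x)
  case 0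
  have "v t x \<le> ennreal C" using bound 0 by auto
  also have "\<dots> \<le> ennreal (C * exp (\<gamma> * t))"
    using C \<gamma> 0 by (intro ennreal_leI) (simp add: mult_le_cancel_left1)
  finally show ?case by simp
next
  case (Suc n)
  have \<rho>0: "0 \<le> \<rho>" and \<theta>0: "0 \<le> \<theta>" unfolding \<rho>_def \<theta>_def using lam \<kappa> \<mu> \<gamma> by simp_all
  define A where "A = a * (\<Sum>i<n. \<rho>^i)"
  define B where "B = C * \<theta>^n"
  have A0: "0 \<le> A" and B0: "0 \<le> B" unfolding A_def B_def using a C \<rho>0 \<theta>0 by (simp_all add: sum_nonneg)
  have mono: "heat_sq_conv \<kappa> v t x
      \<le> heat_sq_conv \<kappa> (\<lambda>s z. ennreal (A * exp (\<beta> * s - c * z)) + ennreal (B * exp (\<gamma> * s))) t x"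
    using Suc.IH Suc.prems by (intro heat_sq_conv_mono) (simp add: A_def B_def mult_ac)
  define E where "E = exp (\<beta> * t - c * x)"
  define X where "X = A * (E / sqrt (4 * \<kappa> * (\<beta> - \<kappa> * c^2 / 4)))"
  define Y where "Y = B * (exp (\<gamma> * t) / sqrt (4 * \<kappa> * \<gamma>))"
  have X0: "0 \<le> X" and Y0: "0 \<le> Y" and E0: "0 \<le> E"
    unfolding X_def Y_def E_def using A0 B0 \<kappa> \<mu> \<gamma> by simp_all
  have "heat_sq_conv \<kappa> v t x \<le> ennreal X + ennreal Y"
    using mono heat_sq_conv_exp_sum_le[OF \<kappa> \<mu> \<gamma> Suc.prems(1) A0 B0]
    unfolding X_def Y_def E_def by (rule order_trans)
  then have "v t x \<le> ennreal (a * E) + ennreal lam * (ennreal X + ennreal Y)"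
    using ineq[OF Suc.prems(1), of x] unfolding E_def by (meson add_left_mono mult_left_mono order_trans zero_le)
  also have "\<dots> = ennreal (a * E + lam * X) + ennreal (lam * Y)"
    using a lam X0 Y0 E0 by (simp add: ennreal_mult ennreal_plus distrib_left add.assoc)
  also have "a * E + lam * X = a * (\<Sum>i<Suc n. \<rho>^i) * E"
    unfolding X_def A_def \<rho>_def sum.lessThan_Suc_shift by (simp add: sum_distrib_left algebra_simps)
  also have "lam * Y = C * \<theta>^Suc n * exp (\<gamma> * t)"
    unfolding Y_def B_def \<theta>_def by (simp add: algebra_simps)
  finally show ?case unfolding E_def .
qed

lemma heat_sq_conv_renewal_bound:
  fixes v :: "real \<Rightarrow> real \<Rightarrow> ennreal" and lam \<kappa> \<beta> c :: real
  defines "\<rho> \<equiv> lam / sqrt (4 * \<kappa> * (\<beta> - \<kappa> * c^2 / 4))"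
  assumes \<kappa>: "0 < \<kappa>" and \<mu>: "0 < \<beta> - \<kappa> * c^2 / 4" and a: "0 \<le> a" and lam: "0 \<le> lam" and \<rho>1: "\<rho> < 1"
    and ineq: "\<And>t x. 0 \<le> t \<Longrightarrow> v t x \<le> ennreal (a * exp (\<beta> * t - c * x)) + ennreal lam * heat_sq_conv \<kappa> v t x"
    and bounded: "\<And>T. 0 \<le> T \<Longrightarrow> \<exists>C. \<forall>t\<in>{0..T}. \<forall>x. v t x \<le> ennreal C"
    and t: "0 \<le> t"
  shows "v t x \<le> ennreal (a / (1 - \<rho>) * exp (\<beta> * t - c * x))"
proof -
  have \<rho>0: "0 \<le> \<rho>" unfolding \<rho>_def using lam \<kappa> \<mu> by simp
  \<comment> \<open>an auxiliary growth rate \<open>\<gamma>\<close>, fast enough to absorb the a priori bound \<open>C\<close> with a contraction \<open>\<theta> < 1\<close>\<close>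
  define \<gamma> where "\<gamma> = lam^2 / \<kappa> + 1"
  define \<theta> where "\<theta> = lam / sqrt (4 * \<kappa> * \<gamma>)"
  have \<gamma>: "0 < \<gamma>" unfolding \<gamma>_def using \<kappa> by (simp add: add_nonneg_pos)
  have \<theta>0: "0 \<le> \<theta>" unfolding \<theta>_def using lam \<kappa> \<gamma> by simp
  have "4 * \<kappa> * \<gamma> = 4 * lam^2 + 4 * \<kappa>" unfolding \<gamma>_def using \<kappa> by (simp add: field_simps)
  then have "lam^2 < 4 * \<kappa> * \<gamma>" using \<kappa> zero_le_power2[of lam] by linarith
  then have "sqrt (lam^2) < sqrt (4 * \<kappa> * \<gamma>)" by (rule real_sqrt_less_mono)
  then have "lam < sqrt (4 * \<kappa> * \<gamma>)" using lam by simp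
  then have \<theta>1: "\<theta> < 1" unfolding \<theta>_def using \<kappa> \<gamma> by simp
  obtain C0 where C0: "\<forall>s\<in>{0..t}. \<forall>x. v s x \<le> ennreal C0" using bounded[OF t] by blast
  have C: "v s y \<le> ennreal (max C0 0)" if "0 \<le> s" "s \<le> t" for s y
    using C0 that order_trans[OF _ ennreal_leI[OF max.cobounded1]] by simp
  define E where "E = exp (\<beta> * t - c * x)"
  have "v t x \<le> ennreal (a / (1 - \<rho>) * E) + ennreal (max C0 0 * \<theta>^n * exp (\<gamma> * t))" for n
  proof -
    have "(\<Sum>i<n. \<rho>^i) \<le> 1 / (1 - \<rho>)"
      using sum_gp_strict[of \<rho> n] \<rho>0 \<rho>1 by (simp add: divide_right_mono)
    then have "a * (\<Sum>i<n. \<rho>^i) * E \<le> a * (1 / (1 - \<rho>)) * E"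
      using a unfolding E_def by (intro mult_right_mono mult_left_mono) auto
    then have "ennreal (a * (\<Sum>i<n. \<rho>^i) * E) \<le> ennreal (a / (1 - \<rho>) * E)"
      by (intro ennreal_leI) simp
    moreover have "v t x \<le> ennreal (a * (\<Sum>i<n. \<rho>^i) * E) + ennreal (max C0 0 * \<theta>^n * exp (\<gamma> * t))"
      using heat_sq_conv_iteration[where n = n and x = x, OF \<kappa> \<mu> \<gamma> a lam max.cobounded2 ineq C t order_refl]
      unfolding \<rho>_def \<theta>_def E_def .
    ultimately show ?thesis by (meson add_right_mono order_trans)
  qed
  moreover have "(\<lambda>n. ennreal (a / (1 - \<rho>) * E) + ennreal (max C0 0 * \<theta>^n * exp (\<gamma> * t)))
      \<longlonglongrightarrow> ennreal (a / (1 - \<rho>) * E) + ennreal (max C0 0 * 0 * exp (\<gamma> * t))"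
    using \<theta>0 \<theta>1 by (intro tendsto_add tendsto_const tendsto_ennrealI tendsto_mult LIMSEQ_power_zero) auto
  ultimately have "v t x \<le> ennreal (a / (1 - \<rho>) * E) + ennreal (max C0 0 * 0 * exp (\<gamma> * t))"
    by (intro LIMSEQ_le_const) auto
  then show ?thesis unfolding E_def by simp
qed

lemma exists_weight_for_contraction:
  fixes q s :: real
  assumes "0 \<le> q" "q < s"
  obtains \<delta> where "0 < \<delta>" "(1 + 1/\<delta>) * q < s"
proof
  show "0 < (s + q) / (s - q)" using assms by simp
  have "(1 + 1 / ((s + q) / (s - q))) * q = 2 * s * q / (s + q)" using assms by (simp add: field_simps)
  also have "\<dots> < s" using assms by (simp add: field_simps)
  finally show "(1 + 1 / ((s + q) / (s - q))) * q < s" .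
qed

lemma beta_above_threshold:
  fixes \<kappa> \<beta> c L :: real
  assumes \<kappa>: "0 < \<kappa>" and \<beta>: "\<kappa> * c^2 / 4 + L^4 / (4 * \<kappa>) < \<beta>"
  shows "0 < \<beta> - \<kappa> * c^2 / 4" and "L^2 < sqrt (4 * \<kappa> * (\<beta> - \<kappa> * c^2 / 4))"
proof -
  have "0 \<le> L^4 / (4 * \<kappa>)" using \<kappa> zero_le_power2[of "L^2"] by (simp flip: power_mult)
  then show "0 < \<beta> - \<kappa> * c^2 / 4" using \<beta> by linarith
  have "(L^2)^2 < 4 * \<kappa> * (\<beta> - \<kappa> * c^2 / 4)"
    using \<beta> \<kappa> by (simp add: field_simps flip: power_mult)
  then have "sqrt ((L^2)^2) < sqrt (4 * \<kappa> * (\<beta> - \<kappa> * c^2 / 4))" by (rule real_sqrt_less_mono)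
  then show "L^2 < sqrt (4 * \<kappa> * (\<beta> - \<kappa> * c^2 / 4))" by (simp only: real_sqrt_abs abs_power2)
qed

theorem proposition4p1:
  fixes M :: "'a measure" and F :: "real \<Rightarrow> 'a set set" and W u :: "real \<Rightarrow> real \<Rightarrow> 'a \<Rightarrow> real"
    and \<kappa> L c \<beta> :: real and \<sigma> u0 :: "real \<Rightarrow> real"
  assumes kappa: "\<kappa> > 0"
    and lip: "\<forall>x y. \<bar>\<sigma> x - \<sigma> y\<bar> \<le> L * \<bar>x - y\<bar>"
    and sigma0: "\<sigma> 0 = 0"
    and sigma_inf: "\<exists>\<epsilon>>0. \<forall>x. x \<noteq> 0 \<longrightarrow> \<epsilon> \<le> \<bar>\<sigma> x / x\<bar>"
    and u0_meas: "u0 \<in> borel_measurable borel"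
    and u0_nonneg: "\<forall>x. 0 \<le> u0 x"
    and u0_bdd: "\<exists>B. \<forall>x. \<bar>u0 x\<bar> \<le> B"
    and W: "brownian_sheet M F W"
    and u: "mild_solution M F W \<kappa> \<sigma> u0 u"
    and decay: "\<exists>K. \<forall>x. \<bar>exp (c * x / 2) * u0 x\<bar> \<le> K"
    and beta: "\<beta> > \<kappa> * c^2 / 4 + L^4 / (4 * \<kappa>)"
  shows "\<exists>A::real. \<forall>t\<ge>0. \<forall>x. (\<integral>\<^sup>+\<omega>. ennreal ((u t x \<omega>)^2) \<partial>M) \<le> ennreal (A * exp (\<beta> * t - c * x))"
proof -
  obtain K where K: "\<forall>x. \<bar>exp (c * x / 2) * u0 x\<bar> \<le> K" using decay by blast
  define S where "S = sqrt (4 * \<kappa> * (\<beta> - \<kappa> * c^2 / 4))"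
  have \<mu>: "0 < \<beta> - \<kappa> * c^2 / 4" and "L^2 < S"
    using beta_above_threshold[OF kappa beta] unfolding S_def by auto
  then obtain \<delta> where \<delta>: "0 < \<delta>" "(1 + 1/\<delta>) * L^2 < S"
    using exists_weight_for_contraction[of "L^2" S] by auto
  define v where "v t x = (\<integral>\<^sup>+\<omega>. ennreal ((u t x \<omega>)^2) \<partial>M)" for t x
  have ineq: "v t x \<le> ennreal ((1 + \<delta>) * K^2 * exp (\<beta> * t - c * x))
      + ennreal ((1 + 1/\<delta>) * L^2) * heat_sq_conv \<kappa> v t x" if "0 \<le> t" for t x
    using mild_solution_second_moment_le[OF kappa lip sigma0 W u K less_imp_le \<delta>(1) that] \<mu>
    unfolding v_def[abs_def] by (simp add: mult.assoc)
  have bounded: "\<exists>C. \<forall>t\<in>{0..T}. \<forall>x. v t x \<le> ennreal C" if "0 \<le> T" for T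
    using u that unfolding mild_solution_def v_def by blast
  have "0 < S" using \<open>L^2 < S\<close> zero_le_power2[of L] by linarith
  then have contraction: "(1 + 1/\<delta>) * L^2 / sqrt (4 * \<kappa> * (\<beta> - \<kappa> * c^2 / 4)) < 1"
    using \<delta>(2) unfolding S_def[symmetric] by (simp add: divide_less_eq_1_pos)
  have "0 \<le> (1 + \<delta>) * K^2" "0 \<le> (1 + 1/\<delta>) * L^2" using \<delta>(1) by simp_all
  from heat_sq_conv_renewal_bound[OF kappa \<mu> this contraction ineq bounded]
  show ?thesis unfolding v_def by blast
qed

end
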